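(* Let $\{Z_n\}_{n\ge0}$ be the $d$-dimensional branching random walk described in the context, with $d\ge1$ and offspring mean $m\le1$. Then there exists a function $F_d(r)\in[0,+\infty]$ such that for every $r>0$, $$\lim_{n\to\infty}\mathbb{P}(R_n\ge r)=e^{-F_d(r)}\in[0,1].$$
   Context: Let $\{p_k\}_{k\ge0}$ be an offspring distribution on $\{0,1,2,\dots\}$ with $p_0<1$, $p_1<1$ and mean $m=\sum_k kp_k$. Let $X$ be an $\mathbb{R}^d$-valued random vector (the displacement) with mean zero whose components are i.i.d. The branching random walk $\{Z_n\}_{n\ge0}$: $Z_0$ is a Poisson random measure on $\mathbb{R}^d$ with Lebesgue intensity (law $\mathbb{P}$); at each generation every particle independently is replaced by a random number of children with law $\{p_k\}$, each child independently displaced from its parent's position by an independent copy of $X$; $Z_n$ is the counting measure of particle positions at generation $n$. Let $B(u)=\{x\in\mathbb{R}^d:|x|<u\}$ and $R_n:=\sup\{u>0:Z_n(B(u))=0\}$ (with $\sup\emptyset=0$); by convention $e^{-\infty}=0$. *)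

theory Defs
  imports "HOL-Probability.Probability"
begin

text \<open>Ulam--Harris construction of the branching random walk started from a Poisson
random measure of Lebesgue intensity on the d-dimensional space (index type 'd).
The space is cut into the unit cubes indexed by k :: int^'d.  An outcome consists of
  N k               : number of initial particles in cube k (Poisson with mean 1),
  xi (k,j,w)        : number of children of the individual w (a word in nat list)
                      descending from the j-th initial particle of cube k (law p),
  U (k,j,i)         : i-th coordinate of the position of the j-th initial particle
                      of cube k (uniform on the i-th side of the cube),
  D (k,j,w,i)       : i-th coordinate of the displacement of individual w from its
                      parent (law mu; coordinates i.i.d.).\<close>

type_synonym 'd brw_outcome =
  "(int^'d \<Rightarrow> nat) \<times> (((int^'d) \<times> nat \<times> nat list) \<Rightarrow> nat) \<times>
   (((int^'d) \<times> nat \<times> 'd) \<Rightarrow> real) \<times> (((int^'d) \<times> nat \<times> nat list \<times> 'd) \<Rightarrow> real)"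

definition brw_space ::
  "nat pmf \<Rightarrow> real measure \<Rightarrow> ('d::finite) brw_outcome measure" where
  "brw_space p \<mu> =
     (\<Pi>\<^sub>M k\<in>UNIV. measure_pmf (poisson_pmf 1)) \<Otimes>\<^sub>M
     ((\<Pi>\<^sub>M a\<in>UNIV. measure_pmf p) \<Otimes>\<^sub>M
      ((\<Pi>\<^sub>M a\<in>UNIV. (case a of (k, j, i) \<Rightarrow>
            uniform_measure lborel {real_of_int (k$i) ..< real_of_int (k$i) + 1})) \<Otimes>\<^sub>M
       (\<Pi>\<^sub>M a\<in>UNIV. \<mu>)))"

definition brw_alive :: "('d::finite) brw_outcome \<Rightarrow> int^'d \<Rightarrow> nat \<Rightarrow> nat list \<Rightarrow> bool" where
  "brw_alive \<omega> k j w \<longleftrightarrow>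
     (case \<omega> of (N, xi, U, D) \<Rightarrow>
        j < N k \<and> (\<forall>t < length w. w ! t < xi (k, j, take t w)))"

definition brw_pos :: "('d::finite) brw_outcome \<Rightarrow> int^'d \<Rightarrow> nat \<Rightarrow> nat list \<Rightarrow> real^'d" where
  "brw_pos \<omega> k j w =
     (case \<omega> of (N, xi, U, D) \<Rightarrow>
        (\<chi> i. U (k, j, i)) + (\<Sum>t\<in>{1..length w}. (\<chi> i. D (k, j, take t w, i))))"

definition brw_Z :: "nat \<Rightarrow> ('d::finite) brw_outcome \<Rightarrow> (real^'d) set \<Rightarrow> enat" where
  "brw_Z n \<omega> B =
     (let S = {(k, j, w). brw_alive \<omega> k j w \<and> length w = n \<and> brw_pos \<omega> k j w \<in> B}
      in if finite S then enat (card S) else \<infinity>)"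

definition brw_R :: "nat \<Rightarrow> ('d::finite) brw_outcome \<Rightarrow> ereal" where
  "brw_R n \<omega> = Sup ({0} \<union> {ereal u | u. u > 0 \<and> brw_Z n \<omega> (ball 0 u) = 0})"

definition exp_neg_ennreal :: "ennreal \<Rightarrow> real" where
  "exp_neg_ennreal x = (if x = \<infinity> then 0 else exp (- enn2real x))"

end

theory Submission
  imports Defs
begin

text \<open>Cut \<open>\<real>\<^sup>d\<close> into unit cubes. The numbers of initial particles in the cubes are independent
  Poisson(1) variables, each initial particle sits uniformly in its cube, and the families
  descending from distinct initial particles are independent. By Poisson thinning, \<open>P(R\<^sub>n \<ge> r)\<close>,
  the probability that no generation-\<open>n\<close> particle lies in \<open>B(r)\<close>, is \<open>exp (- H\<^sub>n(r))\<close>, where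
  \<open>H\<^sub>n(r) = \<integral> P(the family started at x has a generation-n member in B(r)) dx\<close>.
  Splitting a family at the first generation and using translation invariance of Lebesgue measure
  gives \<open>H\<^sub>n\<^sub>+\<^sub>1(r) \<le> m H\<^sub>n(r) \<le> H\<^sub>n(r)\<close>. Hence \<open>P(R\<^sub>n \<ge> r)\<close> increases with \<open>n\<close>, and its limit in
  \<open>[0, 1]\<close> is \<open>e\<^sup>-\<^sup>F\<close> for some \<open>F \<in> [0, \<infinity>]\<close>.\<close>

lemma borel_measurable_if_sets_eq_borel:
  "f \<in> M \<rightarrow>\<^sub>M N \<Longrightarrow> sets N = sets borel \<Longrightarrow> f \<in> borel_measurable M"
  using measurable_cong_sets[of M M N borel] by auto

lemma borel_measurable_PiM_component:
  "i \<in> I \<Longrightarrow> sets (M i) = sets borel \<Longrightarrow> (\<lambda>f. f i) \<in> borel_measurable (PiM I M)"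
  by (rule borel_measurable_if_sets_eq_borel[OF measurable_component_singleton])

section \<open>Independence in infinite product measures\<close>

lemma indep_vars_PiM_coordinates:
  assumes M: "\<And>i. prob_space (M i)"
  shows "prob_space.indep_vars (PiM UNIV M) M (\<lambda>i f. f i) UNIV"
proof -
  interpret product_prob_space M UNIV by (rule product_prob_spaceI[OF M])
  have "distr (PiM UNIV M) (PiM UNIV M) (\<lambda>f. \<lambda>i\<in>UNIV. f i) = distr (PiM UNIV M) (PiM UNIV M) (\<lambda>f. f)"
    by (rule distr_cong) auto
  also have "\<dots> = PiM UNIV M" by (rule distr_id)
  also have "\<dots> = PiM UNIV (\<lambda>i. distr (PiM UNIV M) (M i) (\<lambda>f. f i))"
    by (intro PiM_cong refl PiM_component[symmetric]) auto
  finally show ?thesis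
    by (subst P.indep_vars_iff_distr_eq_PiM) auto
qed

lemma measure_PiM_disjoint_blocks:
  assumes M: "\<And>i. prob_space (M i)"
    and L: "finite L" "disjoint_family_on B L"
    and S: "\<And>l. l \<in> L \<Longrightarrow> S l \<in> sets (PiM (B l) M)"
  shows "measure (PiM UNIV M) {f \<in> space (PiM UNIV M). \<forall>l\<in>L. restrict f (B l) \<in> S l}
       = (\<Prod>l\<in>L. measure (PiM UNIV M) {f \<in> space (PiM UNIV M). restrict f (B l) \<in> S l})"
proof (cases "L = {}")
  case True
  interpret prob_space "PiM UNIV M" by (rule prob_space_PiM[OF M])
  show ?thesis using True prob_space by simp
next
  case False
  interpret product_prob_space M UNIV by (rule product_prob_spaceI[OF M])
  have "P.indep_vars (\<lambda>l. PiM (B l) M) (\<lambda>l f. restrict (\<lambda>i. f i) (B l)) L"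
    by (rule P.indep_vars_restrict[OF indep_vars_PiM_coordinates[OF M]]) (use L in auto)
  then have "P.indep_sets (\<lambda>l. sigma_sets (space (PiM UNIV M))
        {(\<lambda>f. restrict f (B l)) -` A \<inter> space (PiM UNIV M) | A. A \<in> sets (PiM (B l) M)}) L"
    unfolding P.indep_vars_def by simp
  then have "P.prob (\<Inter>l\<in>L. (\<lambda>f. restrict f (B l)) -` S l \<inter> space (PiM UNIV M))
     = (\<Prod>l\<in>L. P.prob ((\<lambda>f. restrict f (B l)) -` S l \<inter> space (PiM UNIV M)))"
    by (rule P.indep_setsD) (use L False S in \<open>auto intro: sigma_sets.Basic\<close>)
  moreover have "(\<Inter>l\<in>L. (\<lambda>f. restrict f (B l)) -` S l \<inter> space (PiM UNIV M))
     = {f \<in> space (PiM UNIV M). \<forall>l\<in>L. restrict f (B l) \<in> S l}"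
    using False by auto
  ultimately show ?thesis by (simp add: vimage_def Int_def conj_commute)
qed

lemma emeasure_PiM_two_blocks:
  assumes M: "\<And>i. prob_space (M i)" and B: "B1 \<inter> B2 = {}"
    and S: "S1 \<in> sets (PiM B1 M)" "S2 \<in> sets (PiM B2 M)"
  shows "emeasure (PiM UNIV M) {f \<in> space (PiM UNIV M). restrict f B1 \<in> S1 \<and> restrict f B2 \<in> S2}
    = emeasure (PiM UNIV M) {f \<in> space (PiM UNIV M). restrict f B1 \<in> S1} *
      emeasure (PiM UNIV M) {f \<in> space (PiM UNIV M). restrict f B2 \<in> S2}"
proof -
  interpret prob_space "PiM UNIV M" by (rule prob_space_PiM[OF M])
  let ?B = "\<lambda>b. if b then B1 else B2" and ?S = "\<lambda>b. if b then S1 else S2"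
  have "measure (PiM UNIV M) {f \<in> space (PiM UNIV M). \<forall>l\<in>UNIV. restrict f (?B l) \<in> ?S l}
       = (\<Prod>l\<in>UNIV. measure (PiM UNIV M) {f \<in> space (PiM UNIV M). restrict f (?B l) \<in> ?S l})"
    by (rule measure_PiM_disjoint_blocks[OF M]) (use B S in \<open>auto simp: disjoint_family_on_def\<close>)
  moreover have "{f \<in> space (PiM UNIV M). \<forall>l\<in>UNIV. restrict f (?B l) \<in> ?S l}
     = {f \<in> space (PiM UNIV M). restrict f B1 \<in> S1 \<and> restrict f B2 \<in> S2}"
    by (auto simp: UNIV_bool)
  ultimately show ?thesis
    by (simp add: UNIV_bool emeasure_eq_measure ennreal_mult[symmetric])
qed

lemma measurable_PiM_reindex:
  "range g \<subseteq> I \<Longrightarrow> (\<lambda>f n. f (g n)) \<in> PiM I M \<rightarrow>\<^sub>M PiM UNIV (\<lambda>n. M (g n))"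
  by (rule measurable_PiM_single') (auto simp: space_PiM PiE_iff intro: measurable_component_singleton)

lemma emeasure_PiM_reindex:
  assumes M: "\<And>i. prob_space (M i)" and g: "inj g" and S: "S \<in> sets (PiM UNIV (\<lambda>n. M (g n)))"
  shows "emeasure (PiM UNIV M) {f \<in> space (PiM UNIV M). (\<lambda>n. f (g n)) \<in> S}
       = emeasure (PiM UNIV (\<lambda>n. M (g n))) S"
proof -
  have meas: "(\<lambda>f n. f (g n)) \<in> PiM UNIV M \<rightarrow>\<^sub>M PiM UNIV (\<lambda>n. M (g n))"
    by (rule measurable_PiM_reindex) simp
  have "distr (PiM UNIV M) (PiM UNIV (\<lambda>n. M (g n))) (\<lambda>f n. f (g n))
      = distr (PiM UNIV M) (PiM UNIV (\<lambda>n. M (g n))) (\<lambda>f. \<lambda>n\<in>UNIV. f (g n))"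
    by (simp add: restrict_def)
  also have "\<dots> = PiM UNIV (\<lambda>n. M (g n))"
    by (rule distr_PiM_reindex) (use M g in auto)
  finally have "emeasure (PiM UNIV (\<lambda>n. M (g n))) S
      = emeasure (distr (PiM UNIV M) (PiM UNIV (\<lambda>n. M (g n))) (\<lambda>f n. f (g n))) S"
    by simp
  also have "\<dots> = emeasure (PiM UNIV M) ((\<lambda>f n. f (g n)) -` S \<inter> space (PiM UNIV M))"
    using S meas by (rule emeasure_distr[rotated])
  also have "(\<lambda>f n. f (g n)) -` S \<inter> space (PiM UNIV M) = {f \<in> space (PiM UNIV M). (\<lambda>n. f (g n)) \<in> S}"
    by auto
  finally show ?thesis ..
qed

lemma emeasure_PiM_Collect_vimage:
  assumes M: "\<And>y. prob_space (M y)" and g: "inj g" and J: "finite J"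
    and X: "\<And>y. g y \<in> J \<Longrightarrow> X y \<in> sets (M y)"
  shows "{x \<in> space (PiM UNIV M). \<forall>y\<in>g -` J. x y \<in> X y} \<in> sets (PiM UNIV M)"
    and "emeasure (PiM UNIV M) {x \<in> space (PiM UNIV M). \<forall>y\<in>g -` J. x y \<in> X y}
       = (\<Prod>y\<in>g -` J. emeasure (M y) (X y))"
proof -
  interpret product_prob_space M UNIV by (rule product_prob_spaceI[OF M])
  have "finite (g -` J)" using J g by (rule finite_vimageI)
  then show "{x \<in> space (PiM UNIV M). \<forall>y\<in>g -` J. x y \<in> X y} \<in> sets (PiM UNIV M)"
    and "emeasure (PiM UNIV M) {x \<in> space (PiM UNIV M). \<forall>y\<in>g -` J. x y \<in> X y}
       = (\<Prod>y\<in>g -` J. emeasure (M y) (X y))"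
    using X by (auto intro!: emeasure_PiM_Collect)
qed

lemma emeasure_pair_measure_Times4:
  assumes "prob_space M2" "prob_space M3" "prob_space M4"
    and "A1 \<in> sets M1" "A2 \<in> sets M2" "A3 \<in> sets M3" "A4 \<in> sets M4"
  shows "emeasure (M1 \<Otimes>\<^sub>M (M2 \<Otimes>\<^sub>M (M3 \<Otimes>\<^sub>M M4))) (A1 \<times> (A2 \<times> (A3 \<times> A4)))
       = emeasure M1 A1 * (emeasure M2 A2 * (emeasure M3 A3 * emeasure M4 A4))"
proof -
  interpret M4: prob_space M4 by fact
  interpret M34: prob_space "M3 \<Otimes>\<^sub>M M4" by (intro prob_space_pair assms)
  interpret M234: prob_space "M2 \<Otimes>\<^sub>M (M3 \<Otimes>\<^sub>M M4)" by (intro prob_space_pair assms)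
  show ?thesis using assms(4-)
    by (simp add: M234.emeasure_pair_measure_Times M34.emeasure_pair_measure_Times M4.emeasure_pair_measure_Times)
qed

lemma distr_PiM_split:
  assumes M: "\<And>i. prob_space (M i)" and g: "inj g" and h: "inj h" and gh: "range g \<inter> range h = {}"
  shows "distr (PiM UNIV M) (PiM UNIV (\<lambda>i. M (g i)) \<Otimes>\<^sub>M PiM UNIV (\<lambda>j. M (h j)))
           (\<lambda>f. (\<lambda>i. f (g i), \<lambda>j. f (h j)))
       = PiM UNIV (\<lambda>i. M (g i)) \<Otimes>\<^sub>M PiM UNIV (\<lambda>j. M (h j))"
    (is "distr ?P (?G \<Otimes>\<^sub>M ?H) ?split = _")
proof (rule pair_measure_eqI[symmetric])
  have mg: "(\<lambda>f i. f (g i)) \<in> PiM I M \<rightarrow>\<^sub>M ?G" if "range g \<subseteq> I" for I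
    using that by (rule measurable_PiM_reindex)
  have mh: "(\<lambda>f j. f (h j)) \<in> PiM I M \<rightarrow>\<^sub>M ?H" if "range h \<subseteq> I" for I
    using that by (rule measurable_PiM_reindex)
  show "sigma_finite_measure ?G" "sigma_finite_measure ?H"
    using M by (auto intro!: prob_space_imp_sigma_finite prob_space_PiM)
  show "sets (?G \<Otimes>\<^sub>M ?H) = sets (distr ?P (?G \<Otimes>\<^sub>M ?H) ?split)" by simp
  fix A B assume A: "A \<in> sets ?G" and B: "B \<in> sets ?H"
  define S1 where "S1 = {f \<in> space (PiM (range g) M). (\<lambda>i. f (g i)) \<in> A}"
  define S2 where "S2 = {f \<in> space (PiM (range h) M). (\<lambda>j. f (h j)) \<in> B}"
  have S1: "S1 \<in> sets (PiM (range g) M)"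
  proof -
    have "(\<lambda>f i. f (g i)) -` A \<inter> space (PiM (range g) M) = S1" by (auto simp: S1_def)
    then show ?thesis using measurable_sets[OF mg[OF order_refl] A] by simp
  qed
  have S2: "S2 \<in> sets (PiM (range h) M)"
  proof -
    have "(\<lambda>f j. f (h j)) -` B \<inter> space (PiM (range h) M) = S2" by (auto simp: S2_def)
    then show ?thesis using measurable_sets[OF mh[OF order_refl] B] by simp
  qed
  have "?split \<in> ?P \<rightarrow>\<^sub>M ?G \<Otimes>\<^sub>M ?H"
    using mg mh by (intro measurable_Pair) auto
  then have "emeasure (distr ?P (?G \<Otimes>\<^sub>M ?H) ?split) (A \<times> B) = emeasure ?P (?split -` (A \<times> B) \<inter> space ?P)"
    using A B by (intro emeasure_distr) auto
  also have "?split -` (A \<times> B) \<inter> space ?P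
      = {f \<in> space ?P. restrict f (range g) \<in> S1 \<and> restrict f (range h) \<in> S2}"
    by (auto simp: S1_def S2_def space_PiM PiE_iff)
  also have "emeasure ?P \<dots> = emeasure ?P {f \<in> space ?P. restrict f (range g) \<in> S1} *
      emeasure ?P {f \<in> space ?P. restrict f (range h) \<in> S2}"
    by (rule emeasure_PiM_two_blocks[OF M gh S1 S2])
  also have "{f \<in> space ?P. restrict f (range g) \<in> S1} = {f \<in> space ?P. (\<lambda>i. f (g i)) \<in> A}"
    by (auto simp: S1_def space_PiM PiE_iff)
  also have "{f \<in> space ?P. restrict f (range h) \<in> S2} = {f \<in> space ?P. (\<lambda>j. f (h j)) \<in> B}"
    by (auto simp: S2_def space_PiM PiE_iff)
  finally show "emeasure ?G A * emeasure ?H B = emeasure (distr ?P (?G \<Otimes>\<^sub>M ?H) ?split) (A \<times> B)"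
    by (simp add: emeasure_PiM_reindex[OF M g A] emeasure_PiM_reindex[OF M h B])
qed

section \<open>Lebesgue measure on coordinate vectors\<close>

definition lborel_fun :: "('d::finite \<Rightarrow> real) measure" where
  "lborel_fun = PiM UNIV (\<lambda>_. lborel)"

lemma space_lborel_fun [simp]: "space lborel_fun = UNIV"
  by (auto simp: lborel_fun_def space_PiM)

lemma product_sigma_finite_lborel: "product_sigma_finite (\<lambda>_. lborel)"
  by (simp add: product_sigma_finite_def sigma_finite_lborel)

lemma sigma_finite_lborel_fun: "sigma_finite_measure (lborel_fun :: ('d::finite \<Rightarrow> real) measure)"
  unfolding lborel_fun_def by (rule product_sigma_finite.sigma_finite[OF product_sigma_finite_lborel]) simp

lemma borel_measurable_lborel_fun_coord:
  "g \<in> M \<rightarrow>\<^sub>M lborel_fun \<Longrightarrow> (\<lambda>x. g x i) \<in> borel_measurable M"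
  unfolding lborel_fun_def by (erule borel_measurable_if_sets_eq_borel[OF measurable_compose[OF _ measurable_component_singleton]]) simp_all

lemma borel_measurable_lborel_fun_component: "(\<lambda>x. x i) \<in> borel_measurable lborel_fun"
  by (rule borel_measurable_lborel_fun_coord[OF measurable_ident_sets[OF refl]])

lemma measurable_translate: "(\<lambda>x i. x i + a i) \<in> lborel_fun \<rightarrow>\<^sub>M lborel_fun"
  unfolding lborel_fun_def
  by (rule measurable_PiM_single') (auto simp: space_PiM measurable_cong_sets[OF refl sets_lborel])

lemma distr_lborel_fun_translate:
  fixes a :: "'d::finite \<Rightarrow> real"
  shows "distr lborel_fun lborel_fun (\<lambda>x i. x i + a i) = lborel_fun"
proof -
  interpret product_sigma_finite "\<lambda>_::'d. lborel" by (rule product_sigma_finite_lborel)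
  have shift: "emeasure lborel ((+) c -` X) = emeasure lborel X" if "X \<in> sets borel" for c :: real and X
    using that by (subst (2) lborel_distr_plus[symmetric, of c]) (simp add: emeasure_distr)
  show ?thesis unfolding lborel_fun_def
  proof (rule PiM_eqI)
    fix A :: "'d \<Rightarrow> real set" assume A: "\<And>i. i \<in> UNIV \<Longrightarrow> A i \<in> sets lborel"
    have pre: "(+) (a i) -` A i \<in> sets lborel" for i
      using A measurable_sets_borel[of "(+) (a i)" borel "A i"] by simp
    have "emeasure (distr (PiM UNIV (\<lambda>_. lborel)) (PiM UNIV (\<lambda>_. lborel)) (\<lambda>x i. x i + a i)) (Pi\<^sub>E UNIV A)
        = emeasure (PiM UNIV (\<lambda>_. lborel)) ((\<lambda>x i. x i + a i) -` Pi\<^sub>E UNIV A \<inter> space (PiM UNIV (\<lambda>_. lborel)))"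
      using A measurable_translate[unfolded lborel_fun_def] by (intro emeasure_distr sets_PiM_I_finite) auto
    also have "(\<lambda>x i. x i + a i) -` Pi\<^sub>E UNIV A \<inter> space (PiM UNIV (\<lambda>_. lborel)) = Pi\<^sub>E UNIV (\<lambda>i. (+) (a i) -` A i)"
      by (auto simp: space_PiM PiE_iff add.commute)
    also have "emeasure (PiM UNIV (\<lambda>_. lborel)) \<dots> = (\<Prod>i\<in>UNIV. emeasure lborel (A i))"
      using A pre by (simp add: emeasure_PiM shift)
    finally show "emeasure (distr (PiM UNIV (\<lambda>_. lborel)) (PiM UNIV (\<lambda>_. lborel)) (\<lambda>x i. x i + a i)) (Pi\<^sub>E UNIV A)
        = (\<Prod>i\<in>UNIV. emeasure lborel (A i))" .
  qed auto
qed

lemma emeasure_lborel_fun_translate: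
  fixes a :: "'d::finite \<Rightarrow> real"
  assumes "Measurable.pred lborel_fun P"
  shows "emeasure lborel_fun {x. P (\<lambda>i. x i + a i)} = emeasure lborel_fun {x. P x}"
proof -
  have "emeasure lborel_fun {x. P x} = emeasure (distr lborel_fun lborel_fun (\<lambda>x i. x i + a i)) {x. P x}"
    by (simp add: distr_lborel_fun_translate)
  also have "\<dots> = emeasure lborel_fun ((\<lambda>x i. x i + a i) -` {x. P x} \<inter> space lborel_fun)"
    using assms by (intro emeasure_distr measurable_translate) (simp add: pred_def)
  finally show ?thesis by (simp add: vimage_def)
qed

section \<open>Galton--Watson trees with displacements\<close>

definition real_pmf :: "nat pmf \<Rightarrow> real measure" where
  "real_pmf q = distr (measure_pmf q) borel real"

lemma prob_space_real_pmf: "prob_space (real_pmf q)"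
  unfolding real_pmf_def by (rule prob_space.prob_space_distr) (auto simp: measure_pmf.prob_space_axioms)

lemma sets_real_pmf [simp]: "sets (real_pmf q) = sets borel"
  by (simp add: real_pmf_def)

lemma space_real_pmf [simp]: "space (real_pmf q) = UNIV"
  by (simp add: real_pmf_def)

lemma emeasure_real_pmf: "A \<in> sets borel \<Longrightarrow> emeasure (real_pmf q) A = emeasure (measure_pmf q) {n. real n \<in> A}"
  unfolding real_pmf_def by (subst emeasure_distr) (auto intro!: arg_cong2[where f=emeasure])

lemma emeasure_real_pmf_nat_floor: "emeasure (real_pmf q) {a. nat \<lfloor>a\<rfloor> = m} = pmf q m"
proof -
  have "{a::real. nat \<lfloor>a\<rfloor> = m} \<in> sets borel" by measurable
  moreover have "{n. real n \<in> {a::real. nat \<lfloor>a\<rfloor> = m}} = {m}" by auto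
  ultimately show ?thesis by (simp add: emeasure_real_pmf emeasure_pmf_single)
qed

lemma suminf_emeasure_pmf_greater:
  "(\<Sum>c. emeasure (measure_pmf p) {k. c < k}) = (\<integral>\<^sup>+ k. ennreal (real k) \<partial>measure_pmf p)"
proof -
  have "(\<Sum>c. indicator {k. c < k} k :: ennreal) = ennreal (real k)" for k
  proof -
    have "(\<Sum>c. indicator {k. c < k} k :: ennreal) = (\<Sum>c<k. 1)"
      by (subst suminf_finite[of "{..<k}"]) (auto intro: sum.cong)
    then show ?thesis by (simp add: ennreal_of_nat_eq_real_of_nat)
  qed
  then have "(\<integral>\<^sup>+ k. ennreal (real k) \<partial>measure_pmf p) = (\<integral>\<^sup>+ k. (\<Sum>c. indicator {k. c < k} k) \<partial>measure_pmf p)"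
    by simp
  also have "\<dots> = (\<Sum>c. \<integral>\<^sup>+ k. indicator {k. c < k} k \<partial>measure_pmf p)"
    by (rule nn_integral_suminf) simp
  finally show ?thesis by simp
qed

lemma nn_integral_real_pmf_greater:
  "(\<integral>\<^sup>+ u. of_bool (c < nat \<lfloor>u ()\<rfloor>) \<partial>PiM UNIV (\<lambda>_::unit. real_pmf p)) = emeasure (measure_pmf p) {k. c < k}"
proof -
  let ?R = "PiM UNIV (\<lambda>_::unit. real_pmf p)"
  interpret R: product_prob_space "\<lambda>_::unit. real_pmf p" UNIV
    by (rule product_prob_spaceI) (rule prob_space_real_pmf)
  have [measurable]: "(\<lambda>u. u ()) \<in> borel_measurable ?R"
    by (rule borel_measurable_PiM_component) simp_all
  have A: "{a::real. c < nat \<lfloor>a\<rfloor>} \<in> sets borel" by measurable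
  have "(\<integral>\<^sup>+ u. of_bool (c < nat \<lfloor>u ()\<rfloor>) \<partial>?R) = (\<integral>\<^sup>+ u. indicator {u \<in> space ?R. u () \<in> {a. c < nat \<lfloor>a\<rfloor>}} u \<partial>?R)"
    by (intro nn_integral_cong) (simp add: indicator_def)
  also have "\<dots> = emeasure ?R {u \<in> space ?R. u () \<in> {a. c < nat \<lfloor>a\<rfloor>}}"
    by (rule nn_integral_indicator) measurable
  also have "\<dots> = emeasure (real_pmf p) {a. c < nat \<lfloor>a\<rfloor>}"
    by (rule R.emeasure_PiM_Collect_single) (simp_all add: A)
  also have "\<dots> = emeasure (measure_pmf p) {k. c < k}"
    using A by (simp add: emeasure_real_pmf)
  finally show ?thesis .
qed

text \<open>A displaced Galton--Watson tree is sampled as a real-valued family: the coordinate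
  \<open>Inl w\<close> holds the number of children of the individual \<open>w\<close> (a Ulam--Harris word) and the
  coordinate \<open>Inr (w, i)\<close> the \<open>i\<close>-th component of its displacement from its parent.\<close>

type_synonym 'd tree_idx = "nat list + nat list \<times> 'd"

definition tree_coord_law :: "nat pmf \<Rightarrow> real measure \<Rightarrow> 'd tree_idx \<Rightarrow> real measure" where
  "tree_coord_law p \<mu> b = (case b of Inl _ \<Rightarrow> real_pmf p | Inr _ \<Rightarrow> \<mu>)"

definition tree_law :: "nat pmf \<Rightarrow> real measure \<Rightarrow> ('d tree_idx \<Rightarrow> real) measure" where
  "tree_law p \<mu> = PiM UNIV (tree_coord_law p \<mu>)"

definition offspring :: "('d tree_idx \<Rightarrow> real) \<Rightarrow> nat list \<Rightarrow> nat" where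
  "offspring t w = nat \<lfloor>t (Inl w)\<rfloor>"

definition tree_alive :: "('d tree_idx \<Rightarrow> real) \<Rightarrow> nat list \<Rightarrow> bool" where
  "tree_alive t w \<longleftrightarrow> (\<forall>i<length w. w ! i < offspring t (take i w))"

definition tree_disp :: "('d tree_idx \<Rightarrow> real) \<Rightarrow> nat list \<Rightarrow> 'd \<Rightarrow> real" where
  "tree_disp t w i = (\<Sum>s\<in>{1..length w}. t (Inr (take s w, i)))"

definition in_ball0 :: "real \<Rightarrow> ('d::finite \<Rightarrow> real) \<Rightarrow> bool" where
  "in_ball0 r v \<longleftrightarrow> (\<Sum>i\<in>UNIV. (v i)\<^sup>2) < r\<^sup>2"

definition tree_hits :: "nat \<Rightarrow> real \<Rightarrow> ('d::finite tree_idx \<Rightarrow> real) \<Rightarrow> ('d \<Rightarrow> real) \<Rightarrow> bool" where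
  "tree_hits n r t x \<longleftrightarrow> (\<exists>w. length w = n \<and> tree_alive t w \<and> in_ball0 r (\<lambda>i. x i + tree_disp t w i))"

lemma tree_coord_law_Inl [simp]: "tree_coord_law p \<mu> (Inl w) = real_pmf p"
  and tree_coord_law_Inr [simp]: "tree_coord_law p \<mu> (Inr v) = \<mu>"
  by (simp_all add: tree_coord_law_def)

lemma prob_space_tree_coord_law: "prob_space \<mu> \<Longrightarrow> prob_space (tree_coord_law p \<mu> b)"
  by (auto simp: tree_coord_law_def prob_space_real_pmf split: sum.splits)

lemma sets_tree_coord_law: "sets \<mu> = sets borel \<Longrightarrow> sets (tree_coord_law p \<mu> b) = sets borel"
  by (auto simp: tree_coord_law_def split: sum.splits)

lemma prob_space_tree_law: "prob_space \<mu> \<Longrightarrow> prob_space (tree_law p \<mu>)"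
  unfolding tree_law_def by (rule prob_space_PiM) (rule prob_space_tree_coord_law)

lemma space_tree_coord_law [simp]: "sets \<mu> = sets borel \<Longrightarrow> space (tree_coord_law p \<mu> b) = UNIV"
  using sets_eq_imp_space_eq[OF sets_tree_coord_law] by simp

lemma space_tree_law [simp]: "sets \<mu> = sets borel \<Longrightarrow> space (tree_law p \<mu>) = UNIV"
  by (auto simp: tree_law_def space_PiM)

lemma borel_measurable_tree_coord:
  assumes "f \<in> M \<rightarrow>\<^sub>M tree_law p \<mu>" "sets \<mu> = sets borel"
  shows "(\<lambda>x. f x b) \<in> borel_measurable M"
  using measurable_compose[OF assms(1)[unfolded tree_law_def] measurable_component_singleton]
  by (rule borel_measurable_if_sets_eq_borel) (simp_all add: sets_tree_coord_law[OF assms(2)])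

lemma measurable_tree_hits:
  fixes f :: "'a \<Rightarrow> 'd::finite tree_idx \<Rightarrow> real"
  assumes [measurable]: "\<And>b. (\<lambda>x. f x b) \<in> borel_measurable M" "\<And>i. (\<lambda>x. g x i) \<in> borel_measurable M"
  shows "Measurable.pred M (\<lambda>x. tree_hits n r (f x) (g x))"
  unfolding tree_hits_def tree_alive_def offspring_def tree_disp_def in_ball0_def by measurable

text \<open>Reindexing a tree by \<open>child_idx c\<close> yields the subtree rooted at the \<open>c\<close>-th child of the root.\<close>

definition child_idx :: "nat \<Rightarrow> 'd tree_idx \<Rightarrow> 'd tree_idx" where
  "child_idx c b = (case b of Inl w \<Rightarrow> Inl (c # w) | Inr (w, i) \<Rightarrow> Inr (c # w, i))"

lemma child_idx_simps [simp]: "child_idx c (Inl w) = Inl (c # w)" "child_idx c (Inr (w, i)) = Inr (c # w, i)"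
  by (simp_all add: child_idx_def)

lemma inj_child_idx: "inj (child_idx c)"
  by (auto simp: inj_def child_idx_def split: sum.splits prod.splits)

lemma tree_coord_law_child_idx [simp]: "tree_coord_law p \<mu> (child_idx c b) = tree_coord_law p \<mu> b"
  by (auto simp: tree_coord_law_def child_idx_def split: sum.splits prod.splits)

lemma tree_hits_Suc:
  assumes "tree_hits (Suc n) r t x"
  shows "\<exists>c < offspring t []. tree_hits n r (\<lambda>b. t (child_idx c b)) (\<lambda>i. x i + t (Inr ([c], i)))"
proof -
  obtain c w where w: "length w = n" "tree_alive t (c # w)" "in_ball0 r (\<lambda>i. x i + tree_disp t (c # w) i)"
    using assms unfolding tree_hits_def by (metis length_Suc_conv)
  have "c < offspring t []" using w(2) unfolding tree_alive_def by (auto dest: spec[of _ 0])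
  moreover have "tree_alive (\<lambda>b. t (child_idx c b)) w"
    unfolding tree_alive_def
  proof (intro allI impI)
    fix i assume "i < length w"
    then have "(c # w) ! Suc i < offspring t (take (Suc i) (c # w))"
      using w(2) unfolding tree_alive_def by (metis length_Cons not_less_eq)
    then show "w ! i < offspring (\<lambda>b. t (child_idx c b)) (take i w)"
      by (simp add: offspring_def)
  qed
  moreover have "tree_disp t (c # w) i = t (Inr ([c], i)) + tree_disp (\<lambda>b. t (child_idx c b)) w i" for i
    unfolding tree_disp_def by (simp add: sum.atLeast_Suc_atMost sum.shift_bounds_cl_Suc_ivl del: sum.cl_ivl_Suc)
  ultimately show ?thesis using w unfolding tree_hits_def by (auto simp: add.assoc)
qed

lemma measurable_subtree: "(\<lambda>t b. t (child_idx c b)) \<in> tree_law p \<mu> \<rightarrow>\<^sub>M tree_law p \<mu>"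
  using measurable_PiM_reindex[of "child_idx c" UNIV "tree_coord_law p \<mu>"] by (simp add: tree_law_def)

section \<open>The hitting intensity decreases along the generations\<close>

definition hit_volume :: "nat \<Rightarrow> real \<Rightarrow> ('d::finite tree_idx \<Rightarrow> real) \<Rightarrow> ennreal" where
  "hit_volume n r t = emeasure lborel_fun {x. tree_hits n r t x}"

definition hit_prob :: "nat pmf \<Rightarrow> real measure \<Rightarrow> nat \<Rightarrow> real \<Rightarrow> ('d::finite \<Rightarrow> real) \<Rightarrow> ennreal" where
  "hit_prob p \<mu> n r x = emeasure (tree_law p \<mu>) {t. tree_hits n r t x}"

text \<open>The expected number of initial particles of the Poisson configuration whose family
  meets \<open>B(r)\<close> at generation \<open>n\<close>.\<close>

definition hit_intensity :: "nat pmf \<Rightarrow> real measure \<Rightarrow> nat \<Rightarrow> real \<Rightarrow> 'd::finite itself \<Rightarrow> ennreal" where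
  "hit_intensity p \<mu> n r _ = (\<integral>\<^sup>+ x. hit_prob p \<mu> n r (x :: 'd \<Rightarrow> real) \<partial>lborel_fun)"

context
  fixes p :: "nat pmf" and \<mu> :: "real measure"
  assumes \<mu>: "prob_space \<mu>" "sets \<mu> = sets borel"
begin

lemma measurable_tree_hits_pair:
  "Measurable.pred (tree_law p \<mu> \<Otimes>\<^sub>M lborel_fun) (\<lambda>z. tree_hits n r (fst z) (snd z :: 'd::finite \<Rightarrow> real))"
  by (intro measurable_tree_hits borel_measurable_tree_coord[OF measurable_fst \<mu>(2)]
      borel_measurable_lborel_fun_coord[OF measurable_snd])

lemma borel_measurable_hit_volume:
  "(hit_volume n r :: ('d::finite tree_idx \<Rightarrow> real) \<Rightarrow> ennreal) \<in> borel_measurable (tree_law p \<mu>)"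
proof -
  interpret L: sigma_finite_measure "lborel_fun :: ('d \<Rightarrow> real) measure" by (rule sigma_finite_lborel_fun)
  let ?S = "{z \<in> space (tree_law p \<mu> \<Otimes>\<^sub>M lborel_fun). tree_hits n r (fst z) (snd z :: 'd \<Rightarrow> real)}"
  have "?S \<in> sets (tree_law p \<mu> \<Otimes>\<^sub>M lborel_fun)" using measurable_tree_hits_pair by measurable
  then have "(\<lambda>t. emeasure lborel_fun (Pair t -` ?S)) \<in> borel_measurable (tree_law p \<mu>)"
    by (rule L.measurable_emeasure_Pair)
  moreover have "Pair t -` ?S = {x. tree_hits n r t x}" for t
    using \<mu> by (auto simp: space_pair_measure)
  ultimately show ?thesis by (simp add: hit_volume_def[abs_def])
qed

lemma borel_measurable_hit_prob: "hit_prob p \<mu> n r \<in> borel_measurable (lborel_fun :: ('d::finite \<Rightarrow> real) measure)"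
proof -
  interpret Q: sigma_finite_measure "tree_law p \<mu> :: ('d tree_idx \<Rightarrow> real) measure"
    by (rule prob_space_imp_sigma_finite[OF prob_space_tree_law[OF \<mu>(1)]])
  let ?S = "{z \<in> space (lborel_fun \<Otimes>\<^sub>M tree_law p \<mu>). tree_hits n r (snd z) (fst z :: 'd \<Rightarrow> real)}"
  have "Measurable.pred (lborel_fun \<Otimes>\<^sub>M tree_law p \<mu>) (\<lambda>z. tree_hits n r (snd z) (fst z :: 'd \<Rightarrow> real))"
    by (intro measurable_tree_hits borel_measurable_tree_coord[OF measurable_snd \<mu>(2)]
        borel_measurable_lborel_fun_coord[OF measurable_fst])
  then have "?S \<in> sets (lborel_fun \<Otimes>\<^sub>M tree_law p \<mu>)" by measurable
  then have "(\<lambda>x. emeasure (tree_law p \<mu>) (Pair x -` ?S)) \<in> borel_measurable lborel_fun"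
    by (rule Q.measurable_emeasure_Pair)
  moreover have "Pair x -` ?S = {t. tree_hits n r t x}" for x
    using \<mu> by (auto simp: space_pair_measure)
  ultimately show ?thesis by (simp add: hit_prob_def[abs_def])
qed

lemma hit_intensity_eq_nn_integral_hit_volume:
  "hit_intensity p \<mu> n r TYPE('d::finite) = (\<integral>\<^sup>+ t. hit_volume n r t \<partial>(tree_law p \<mu> :: ('d tree_idx \<Rightarrow> real) measure))"
proof -
  interpret Q: sigma_finite_measure "tree_law p \<mu> :: ('d tree_idx \<Rightarrow> real) measure"
    by (rule prob_space_imp_sigma_finite[OF prob_space_tree_law[OF \<mu>(1)]])
  interpret L: sigma_finite_measure "lborel_fun :: ('d \<Rightarrow> real) measure" by (rule sigma_finite_lborel_fun)
  interpret pair_sigma_finite "tree_law p \<mu> :: ('d tree_idx \<Rightarrow> real) measure" "lborel_fun :: ('d \<Rightarrow> real) measure" ..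
  let ?S = "{z \<in> space (tree_law p \<mu> \<Otimes>\<^sub>M lborel_fun). tree_hits n r (fst z) (snd z :: 'd \<Rightarrow> real)}"
  have S: "?S \<in> sets (tree_law p \<mu> \<Otimes>\<^sub>M lborel_fun)" using measurable_tree_hits_pair by measurable
  have sect_x: "{t. tree_hits n r t x} = (\<lambda>t. (t, x)) -` ?S" for x :: "'d \<Rightarrow> real"
    using \<mu> by (auto simp: space_pair_measure)
  have "hit_intensity p \<mu> n r TYPE('d) = emeasure (tree_law p \<mu> \<Otimes>\<^sub>M lborel_fun) ?S"
    unfolding hit_intensity_def hit_prob_def sect_x by (rule emeasure_pair_measure_alt2[OF S, symmetric])
  also have "\<dots> = (\<integral>\<^sup>+ t. emeasure lborel_fun (Pair t -` ?S) \<partial>tree_law p \<mu>)"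
    by (rule L.emeasure_pair_measure_alt[OF S])
  also have "\<dots> = (\<integral>\<^sup>+ t. hit_volume n r (t :: 'd tree_idx \<Rightarrow> real) \<partial>tree_law p \<mu>)"
    using \<mu> by (simp add: hit_volume_def space_pair_measure)
  finally show ?thesis .
qed

lemma hit_volume_Suc_le:
  fixes t :: "'d::finite tree_idx \<Rightarrow> real"
  shows "hit_volume (Suc n) r t \<le> (\<Sum>c. of_bool (c < offspring t []) * hit_volume n r (\<lambda>b. t (child_idx c b)))"
proof -
  define A where "A c = {x. c < offspring t [] \<and> tree_hits n r (\<lambda>b. t (child_idx c b)) (\<lambda>i. x i + t (Inr ([c], i)))}" for c
  have A: "A c \<in> sets lborel_fun" for c
  proof -
    have "Measurable.pred lborel_fun (\<lambda>x. tree_hits n r (\<lambda>b. t (child_idx c b)) (\<lambda>i. x i + t (Inr ([c], i))))"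
      by (intro measurable_tree_hits borel_measurable_lborel_fun_coord[OF measurable_translate]) simp
    then have "{x \<in> space lborel_fun. c < offspring t [] \<and>
        tree_hits n r (\<lambda>b. t (child_idx c b)) (\<lambda>i. x i + t (Inr ([c], i)))} \<in> sets lborel_fun"
      by measurable
    then show ?thesis by (simp add: A_def)
  qed
  have A_eq: "emeasure lborel_fun (A c) = of_bool (c < offspring t []) * hit_volume n r (\<lambda>b. t (child_idx c b))" for c
  proof (cases "c < offspring t []")
    case True
    have "Measurable.pred lborel_fun (tree_hits n r (\<lambda>b. t (child_idx c b)))"
      by (intro measurable_tree_hits borel_measurable_lborel_fun_component) simp
    then show ?thesis using True
      by (simp add: A_def hit_volume_def emeasure_lborel_fun_translate[where P="tree_hits n r (\<lambda>b. t (child_idx c b))"])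
  qed (simp add: A_def)
  have "hit_volume (Suc n) r t \<le> emeasure lborel_fun (\<Union>c. A c)"
    unfolding hit_volume_def using A by (intro emeasure_mono) (auto simp: A_def dest!: tree_hits_Suc)
  also have "\<dots> \<le> (\<Sum>c. emeasure lborel_fun (A c))"
    using A by (intro emeasure_subadditive_countably) auto
  finally show ?thesis by (simp only: A_eq)
qed

lemma nn_integral_root_subtree:
  fixes c :: nat
  defines "Q \<equiv> tree_law p \<mu> :: ('d::finite tree_idx \<Rightarrow> real) measure"
  shows "(\<integral>\<^sup>+ t. of_bool (c < offspring t []) * hit_volume n r (\<lambda>b. t (child_idx c b)) \<partial>Q)
       = emeasure (measure_pmf p) {k. c < k} * (\<integral>\<^sup>+ t. hit_volume n r t \<partial>Q)"
proof -
  let ?R = "PiM UNIV (\<lambda>_::unit. real_pmf p)"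
  let ?split = "\<lambda>t. (\<lambda>_::unit. t (Inl []), \<lambda>b. t (child_idx c b))"
  interpret Q: sigma_finite_measure Q
    unfolding Q_def by (rule prob_space_imp_sigma_finite[OF prob_space_tree_law[OF \<mu>(1)]])
  define F where "F z = of_bool (c < nat \<lfloor>fst z ()\<rfloor>) * hit_volume n r (snd z)"
    for z :: "(unit \<Rightarrow> real) \<times> ('d tree_idx \<Rightarrow> real)"
  have "range (\<lambda>_::unit. Inl []) \<inter> range (child_idx c :: 'd tree_idx \<Rightarrow> _) = {}"
    by (auto simp: child_idx_def split: sum.splits prod.splits)
  \<comment> \<open>the offspring number of the root is independent of the subtree of its child \<open>c\<close>\<close>
  from distr_PiM_split[where M="tree_coord_law p \<mu>", OF prob_space_tree_coord_law[OF \<mu>(1)] _ inj_child_idx this]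
  have split: "distr Q (?R \<Otimes>\<^sub>M Q) ?split = ?R \<Otimes>\<^sub>M Q"
    by (simp add: Q_def tree_law_def inj_def)
  have [measurable]: "(\<lambda>u. u ()) \<in> borel_measurable ?R"
    by (rule borel_measurable_PiM_component) simp_all
  have [measurable]: "hit_volume n r \<in> borel_measurable Q"
    unfolding Q_def by (rule borel_measurable_hit_volume)
  have F: "F \<in> borel_measurable (?R \<Otimes>\<^sub>M Q)"
    unfolding F_def[abs_def] by measurable
  have "?split \<in> Q \<rightarrow>\<^sub>M ?R \<Otimes>\<^sub>M Q"
    using measurable_PiM_reindex[of "\<lambda>_::unit. Inl []" UNIV "tree_coord_law p \<mu>"] measurable_subtree
    by (intro measurable_Pair) (simp_all add: Q_def tree_law_def)
  then have "(\<integral>\<^sup>+ t. of_bool (c < offspring t []) * hit_volume n r (\<lambda>b. t (child_idx c b)) \<partial>Q)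
      = (\<integral>\<^sup>+ z. F z \<partial>distr Q (?R \<Otimes>\<^sub>M Q) ?split)"
    using F by (simp add: nn_integral_distr F_def offspring_def)
  also have "\<dots> = (\<integral>\<^sup>+ z. of_bool (c < nat \<lfloor>fst z ()\<rfloor>) * hit_volume n r (snd z) \<partial>(?R \<Otimes>\<^sub>M Q))"
    by (simp only: split F_def)
  also have "\<dots> = (\<integral>\<^sup>+ u. of_bool (c < nat \<lfloor>u ()\<rfloor>) * (\<integral>\<^sup>+ t. hit_volume n r t \<partial>Q) \<partial>?R)"
    by (subst Q.nn_integral_fst[symmetric]) (simp_all add: nn_integral_cmult)
  also have "\<dots> = (\<integral>\<^sup>+ u. of_bool (c < nat \<lfloor>u ()\<rfloor>) \<partial>?R) * (\<integral>\<^sup>+ t. hit_volume n r t \<partial>Q)"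
    by (rule nn_integral_multc) measurable
  also have "\<dots> = emeasure (measure_pmf p) {k. c < k} * (\<integral>\<^sup>+ t. hit_volume n r t \<partial>Q)"
    by (simp only: nn_integral_real_pmf_greater)
  finally show ?thesis .
qed

lemma hit_intensity_Suc_le:
  assumes mean: "(\<integral>\<^sup>+ k. ennreal (real k) \<partial>measure_pmf p) \<le> 1"
  shows "hit_intensity p \<mu> (Suc n) r TYPE('d::finite) \<le> hit_intensity p \<mu> n r TYPE('d)"
proof -
  let ?Q = "tree_law p \<mu> :: ('d tree_idx \<Rightarrow> real) measure"
  have [measurable]: "hit_volume n r \<in> borel_measurable ?Q" "(\<lambda>t. t b) \<in> borel_measurable ?Q" for b
    by (rule borel_measurable_hit_volume, rule borel_measurable_tree_coord[OF measurable_ident_sets[OF refl] \<mu>(2)])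
  have [measurable]: "(\<lambda>t b. t (child_idx c b)) \<in> ?Q \<rightarrow>\<^sub>M ?Q" for c
    by (rule measurable_subtree)
  have "hit_intensity p \<mu> (Suc n) r TYPE('d) = (\<integral>\<^sup>+ t. hit_volume (Suc n) r t \<partial>?Q)"
    by (rule hit_intensity_eq_nn_integral_hit_volume)
  also have "\<dots> \<le> (\<integral>\<^sup>+ t. (\<Sum>c. of_bool (c < offspring t []) * hit_volume n r (\<lambda>b. t (child_idx c b))) \<partial>?Q)"
    by (intro nn_integral_mono hit_volume_Suc_le)
  also have "\<dots> = (\<Sum>c. \<integral>\<^sup>+ t. of_bool (c < offspring t []) * hit_volume n r (\<lambda>b. t (child_idx c b)) \<partial>?Q)"
    by (rule nn_integral_suminf) (unfold offspring_def, measurable)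
  also have "\<dots> = (\<integral>\<^sup>+ k. ennreal (real k) \<partial>measure_pmf p) * (\<integral>\<^sup>+ t. hit_volume n r t \<partial>?Q)"
    by (simp add: nn_integral_root_subtree suminf_emeasure_pmf_greater[symmetric] ennreal_suminf_multc)
  also have "\<dots> \<le> hit_intensity p \<mu> n r TYPE('d)"
    using mult_right_mono[OF mean] by (simp add: hit_intensity_eq_nn_integral_hit_volume)
  finally show ?thesis .
qed

end

section \<open>Families started uniformly in a unit cube\<close>

definition unit_uniform :: "real \<Rightarrow> real measure" where
  "unit_uniform a = uniform_measure lborel {a..<a + 1}"

definition cube :: "int^'d \<Rightarrow> ('d::finite \<Rightarrow> real) set" where
  "cube k = PiE UNIV (\<lambda>i. {real_of_int (k$i) ..< real_of_int (k$i) + 1})"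

definition cube_uniform :: "int^'d \<Rightarrow> ('d::finite \<Rightarrow> real) measure" where
  "cube_uniform k = PiM UNIV (\<lambda>i. unit_uniform (real_of_int (k$i)))"

lemma prob_space_unit_uniform: "prob_space (unit_uniform a)"
  unfolding unit_uniform_def by (rule prob_space_uniform_measure) auto

lemma sets_unit_uniform [simp]: "sets (unit_uniform a) = sets borel"
  by (simp add: unit_uniform_def)

lemma sets_cube_uniform: "sets (cube_uniform k) = sets lborel_fun"
  unfolding cube_uniform_def lborel_fun_def by (rule sets_PiM_cong) auto

lemma cube_in_sets: "cube k \<in> sets lborel_fun"
  unfolding cube_def lborel_fun_def by (rule sets_PiM_I_finite) auto

lemma cube_uniform_eq_density:
  fixes k :: "int^'d::finite"
  shows "cube_uniform k = density lborel_fun (indicator (cube k))"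
proof -
  let ?M = "\<lambda>i::'d. unit_uniform (real_of_int (k$i))"
  let ?I = "\<lambda>i::'d. {real_of_int (k$i) ..< real_of_int (k$i) + 1}"
  interpret product_sigma_finite ?M
    by (simp add: product_sigma_finite_def prob_space_imp_sigma_finite prob_space_unit_uniform)
  interpret L: product_sigma_finite "\<lambda>_::'d. lborel" by (rule product_sigma_finite_lborel)
  have "density lborel_fun (indicator (cube k)) = PiM UNIV ?M"
  proof (rule PiM_eqI)
    fix A :: "'d \<Rightarrow> real set" assume "\<And>i. i \<in> UNIV \<Longrightarrow> A i \<in> sets (?M i)"
    then have A: "A i \<in> sets borel" for i by simp
    have box: "PiE UNIV B \<in> sets lborel_fun" if "\<And>i. B i \<in> sets borel" for B :: "'d \<Rightarrow> real set"
      unfolding lborel_fun_def using that by (intro sets_PiM_I_finite) auto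
    have "emeasure (density lborel_fun (indicator (cube k))) (PiE UNIV A)
        = (\<integral>\<^sup>+ x. indicator (cube k) x * indicator (PiE UNIV A) x \<partial>lborel_fun)"
      using A cube_in_sets[of k] box by (subst emeasure_density) auto
    also have "\<dots> = (\<integral>\<^sup>+ x. indicator (PiE UNIV (\<lambda>i. ?I i \<inter> A i)) x \<partial>lborel_fun)"
      by (intro nn_integral_cong) (auto simp: indicator_def cube_def PiE_iff)
    also have "\<dots> = emeasure lborel_fun (PiE UNIV (\<lambda>i. ?I i \<inter> A i))"
      using A box by (intro nn_integral_indicator) auto
    also have "\<dots> = (\<Prod>i\<in>UNIV. emeasure lborel (?I i \<inter> A i))"
      unfolding lborel_fun_def using A by (subst L.emeasure_PiM) auto
    also have "\<dots> = (\<Prod>i\<in>UNIV. emeasure (?M i) (A i))"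
      using A by (intro prod.cong refl) (simp add: unit_uniform_def divide_ennreal_def)
    finally show "emeasure (density lborel_fun (indicator (cube k))) (PiE UNIV A) = (\<Prod>i\<in>UNIV. emeasure (?M i) (A i))" .
  qed (simp, subst sets_density, rule sets_cube_uniform[symmetric, unfolded cube_uniform_def])
  then show ?thesis by (simp add: cube_uniform_def)
qed

text \<open>A family consists of an initial particle, with coordinates at \<open>Inl i\<close>, and its
  displaced Galton--Watson tree.\<close>

type_synonym 'd family_idx = "'d + 'd tree_idx"

definition family_coord_law :: "nat pmf \<Rightarrow> real measure \<Rightarrow> int^'d \<Rightarrow> 'd family_idx \<Rightarrow> real measure" where
  "family_coord_law p \<mu> k a = (case a of Inl i \<Rightarrow> unit_uniform (real_of_int (k$i)) | Inr b \<Rightarrow> tree_coord_law p \<mu> b)"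

definition family_law :: "nat pmf \<Rightarrow> real measure \<Rightarrow> int^'d \<Rightarrow> ('d::finite family_idx \<Rightarrow> real) measure" where
  "family_law p \<mu> k = PiM UNIV (family_coord_law p \<mu> k)"

definition family_hits :: "nat \<Rightarrow> real \<Rightarrow> ('d::finite family_idx \<Rightarrow> real) \<Rightarrow> bool" where
  "family_hits n r s \<longleftrightarrow> tree_hits n r (\<lambda>b. s (Inr b)) (\<lambda>i. s (Inl i))"

definition cube_hit_prob :: "nat pmf \<Rightarrow> real measure \<Rightarrow> nat \<Rightarrow> real \<Rightarrow> int^'d \<Rightarrow> real" where
  "cube_hit_prob p \<mu> n r k = measure (family_law p \<mu> k :: ('d::finite family_idx \<Rightarrow> real) measure) {s. family_hits n r s}"

lemma family_coord_law_simps [simp]: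
  "family_coord_law p \<mu> k (Inl i) = unit_uniform (real_of_int (k$i))"
  "family_coord_law p \<mu> k (Inr b) = tree_coord_law p \<mu> b"
  by (simp_all add: family_coord_law_def)

lemma prob_space_family_coord_law: "prob_space \<mu> \<Longrightarrow> prob_space (family_coord_law p \<mu> k a)"
  by (auto simp: family_coord_law_def prob_space_unit_uniform prob_space_tree_coord_law split: sum.splits)

lemma sets_family_coord_law: "sets \<mu> = sets borel \<Longrightarrow> sets (family_coord_law p \<mu> k a) = sets borel"
  by (auto simp: family_coord_law_def sets_tree_coord_law split: sum.splits)

lemma space_family_coord_law [simp]: "sets \<mu> = sets borel \<Longrightarrow> space (family_coord_law p \<mu> k a) = UNIV"
  using sets_eq_imp_space_eq[OF sets_family_coord_law] by simp

lemma space_family_law [simp]: "sets \<mu> = sets borel \<Longrightarrow> space (family_law p \<mu> k) = UNIV"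
  by (auto simp: family_law_def space_PiM)

lemma prob_space_family_law: "prob_space \<mu> \<Longrightarrow> prob_space (family_law p \<mu> k)"
  unfolding family_law_def by (rule prob_space_PiM) (rule prob_space_family_coord_law)

lemma measurable_family_hits:
  "(\<And>a. (\<lambda>x. \<phi> x a) \<in> borel_measurable M) \<Longrightarrow> Measurable.pred M (\<lambda>x. family_hits n r (\<phi> x))"
  unfolding family_hits_def by (rule measurable_tree_hits)

lemma cube_hit_prob_eq_nn_integral:
  fixes k :: "int^'d::finite"
  assumes \<mu>: "prob_space \<mu>" "sets \<mu> = sets borel"
  shows "ennreal (cube_hit_prob p \<mu> n r k) = (\<integral>\<^sup>+ x. indicator (cube k) x * hit_prob p \<mu> n r x \<partial>lborel_fun)"
proof -
  let ?F = "family_law p \<mu> k" and ?Q = "tree_law p \<mu> :: ('d tree_idx \<Rightarrow> real) measure"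
  let ?split = "\<lambda>s. (\<lambda>i. s (Inl i), \<lambda>b. s (Inr b))"
  let ?X = "{z \<in> space (cube_uniform k \<Otimes>\<^sub>M ?Q). tree_hits n r (snd z) (fst z)}"
  interpret F: prob_space ?F by (rule prob_space_family_law[OF \<mu>(1)])
  interpret Q: sigma_finite_measure ?Q by (rule prob_space_imp_sigma_finite[OF prob_space_tree_law[OF \<mu>(1)]])
  have split: "distr ?F (cube_uniform k \<Otimes>\<^sub>M ?Q) ?split = cube_uniform k \<Otimes>\<^sub>M ?Q"
    using distr_PiM_split[where M="family_coord_law p \<mu> k" and g=Inl and h=Inr,
        OF prob_space_family_coord_law[OF \<mu>(1)]]
    by (auto simp: family_law_def cube_uniform_def tree_law_def)
  have [measurable]: "?split \<in> ?F \<rightarrow>\<^sub>M cube_uniform k \<Otimes>\<^sub>M ?Q"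
    using measurable_PiM_reindex[of Inl UNIV "family_coord_law p \<mu> k"]
      measurable_PiM_reindex[of Inr UNIV "family_coord_law p \<mu> k"]
    by (intro measurable_Pair) (simp_all add: family_law_def cube_uniform_def tree_law_def)
  have X: "?X \<in> sets (cube_uniform k \<Otimes>\<^sub>M ?Q)"
  proof -
    have "Measurable.pred (cube_uniform k \<Otimes>\<^sub>M ?Q) (\<lambda>z. tree_hits n r (snd z) (fst z))"
      by (intro measurable_tree_hits borel_measurable_tree_coord[OF measurable_snd \<mu>(2)]
          borel_measurable_lborel_fun_coord[OF measurable_compose[OF measurable_fst measurable_ident_sets[OF sets_cube_uniform]]])
    then show ?thesis by measurable
  qed
  have "ennreal (cube_hit_prob p \<mu> n r k) = emeasure ?F (?split -` ?X \<inter> space ?F)"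
    unfolding cube_hit_prob_def F.emeasure_eq_measure[symmetric]
    using \<mu> by (intro arg_cong2[where f=emeasure]) (auto simp: family_hits_def space_pair_measure
        family_law_def space_PiM PiE_iff sets_eq_imp_space_eq[OF sets_family_coord_law]
        sets_eq_imp_space_eq[OF sets_cube_uniform] tree_law_def)
  also have "\<dots> = emeasure (distr ?F (cube_uniform k \<Otimes>\<^sub>M ?Q) ?split) ?X"
    by (rule emeasure_distr[symmetric, OF _ X]) measurable
  also have "\<dots> = emeasure (cube_uniform k \<Otimes>\<^sub>M ?Q) ?X"
    by (simp only: split)
  also have "\<dots> = (\<integral>\<^sup>+ u. emeasure ?Q (Pair u -` ?X) \<partial>cube_uniform k)"
    by (rule Q.emeasure_pair_measure_alt[OF X])
  also have "\<dots> = (\<integral>\<^sup>+ u. hit_prob p \<mu> n r u \<partial>cube_uniform k)"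
    using \<mu> by (intro nn_integral_cong) (auto simp: hit_prob_def space_pair_measure)
  also have "\<dots> = (\<integral>\<^sup>+ x. indicator (cube k) x * hit_prob p \<mu> n r x \<partial>lborel_fun)"
    unfolding cube_uniform_eq_density using borel_measurable_hit_prob[OF \<mu>] cube_in_sets[of k]
    by (subst nn_integral_density) auto
  finally show ?thesis .
qed

lemma tendsto_exp_neg_ennreal:
  assumes "\<And>N. 0 \<le> s N" and lim: "(\<lambda>N. ennreal (s N)) \<longlonglongrightarrow> h"
  shows "(\<lambda>N. exp (- s N)) \<longlonglongrightarrow> exp_neg_ennreal h"
proof (cases h)
  case (real h')
  then have "s \<longlonglongrightarrow> h'" using assms by (intro tendsto_ennrealD) auto
  then show ?thesis using real by (auto simp: exp_neg_ennreal_def intro!: tendsto_intros)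
next
  case top
  then have "filterlim s at_top sequentially"
    using lim by (simp add: ennreal_tendsto_top_eq_at_top[symmetric])
  then have "(\<lambda>N. exp (- s N)) \<longlonglongrightarrow> 0"
    by (rule filterlim_compose[OF exp_at_bot filterlim_compose[OF filterlim_uminus_at_bot_at_top]])
  then show ?thesis using top by (simp add: exp_neg_ennreal_def)
qed

lemma exp_neg_ennreal_antimono: "x \<le> y \<Longrightarrow> exp_neg_ennreal y \<le> exp_neg_ennreal x"
  by (cases x; cases y) (auto simp: exp_neg_ennreal_def top_unique)

lemma exp_neg_ennreal_range: "exp_neg_ennreal x \<in> {0..1}"
  by (auto simp: exp_neg_ennreal_def)

lemma exp_neg_ennreal_surj: "L \<in> {0..1} \<Longrightarrow> \<exists>v. exp_neg_ennreal v = L"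
proof (cases "L = 0")
  case True
  then show ?thesis by (intro exI[of _ \<infinity>]) (simp add: exp_neg_ennreal_def)
next
  case False
  moreover assume "L \<in> {0..1}"
  ultimately show ?thesis
    by (intro exI[of _ "ennreal (- ln L)"]) (simp add: exp_neg_ennreal_def)
qed

lemma decseq_exp_neg_ennreal_tendsto:
  assumes "decseq F"
  shows "\<exists>v. (\<lambda>n. exp_neg_ennreal (F n)) \<longlonglongrightarrow> exp_neg_ennreal v"
proof -
  let ?X = "\<lambda>n. exp_neg_ennreal (F n)"
  have "incseq ?X"
    using assms by (auto simp: incseq_def decseq_def intro: exp_neg_ennreal_antimono)
  moreover have bdd: "bdd_above (range ?X)"
    using exp_neg_ennreal_range by (auto intro: bdd_aboveI[of _ 1])
  ultimately have "?X \<longlonglongrightarrow> (SUP n. ?X n)"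
    by (intro LIMSEQ_incseq_SUP)
  moreover have "(SUP n. ?X n) \<in> {0..1}"
    using exp_neg_ennreal_range bdd by (auto intro: cSUP_upper2[where x=0] cSUP_least)
  ultimately show ?thesis
    by (metis exp_neg_ennreal_surj)
qed

section \<open>Poisson thinning over the unit cubes\<close>

text \<open>The branching random walk is re-encoded as one real-valued family with a product law:
  the coordinate \<open>Inl k\<close> holds the number of initial particles in the cube \<open>k\<close>, and the
  coordinate \<open>Inr ((k, j), a)\<close> the coordinate \<open>a\<close> of the family of the \<open>j\<close>-th of them.\<close>

type_synonym 'd brw_idx = "(int^'d) + (((int^'d) \<times> nat) \<times> 'd family_idx)"

definition brw_coord_law :: "nat pmf \<Rightarrow> real measure \<Rightarrow> ('d::finite) brw_idx \<Rightarrow> real measure" where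
  "brw_coord_law p \<mu> a =
     (case a of Inl _ \<Rightarrow> real_pmf (poisson_pmf 1) | Inr ((k, _), b) \<Rightarrow> family_coord_law p \<mu> k b)"

definition brw_law :: "nat pmf \<Rightarrow> real measure \<Rightarrow> (('d::finite) brw_idx \<Rightarrow> real) measure" where
  "brw_law p \<mu> = PiM UNIV (brw_coord_law p \<mu>)"

definition cube_clear :: "nat \<Rightarrow> real \<Rightarrow> int^'d \<Rightarrow> (('d::finite) brw_idx \<Rightarrow> real) \<Rightarrow> bool" where
  "cube_clear n r k f \<longleftrightarrow> (\<forall>j < nat \<lfloor>f (Inl k)\<rfloor>. \<not> family_hits n r (\<lambda>b. f (Inr ((k, j), b))))"

lemma brw_coord_law_simps [simp]:
  "brw_coord_law p \<mu> (Inl k) = real_pmf (poisson_pmf 1)"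
  "brw_coord_law p \<mu> (Inr ((k, j), b)) = family_coord_law p \<mu> k b"
  by (simp_all add: brw_coord_law_def)

lemma prob_space_brw_coord_law: "prob_space \<mu> \<Longrightarrow> prob_space (brw_coord_law p \<mu> a)"
  by (auto simp: brw_coord_law_def prob_space_real_pmf prob_space_family_coord_law split: sum.splits prod.splits)

lemma sets_brw_coord_law: "sets \<mu> = sets borel \<Longrightarrow> sets (brw_coord_law p \<mu> a) = sets borel"
  by (auto simp: brw_coord_law_def sets_family_coord_law split: sum.splits prod.splits)

lemma space_brw_coord_law [simp]: "sets \<mu> = sets borel \<Longrightarrow> space (brw_coord_law p \<mu> a) = UNIV"
  using sets_eq_imp_space_eq[OF sets_brw_coord_law] by simp

lemma space_brw_law [simp]: "sets \<mu> = sets borel \<Longrightarrow> space (brw_law p \<mu>) = UNIV"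
  by (auto simp: brw_law_def space_PiM)

context
  fixes p :: "nat pmf" and \<mu> :: "real measure"
  assumes \<mu>: "prob_space \<mu>" "sets \<mu> = sets borel"
begin

lemma borel_measurable_brw_component:
  "a \<in> I \<Longrightarrow> (\<lambda>f. f a) \<in> borel_measurable (PiM I (brw_coord_law p \<mu>))"
  by (erule borel_measurable_PiM_component) (rule sets_brw_coord_law[OF \<mu>(2)])

lemma measurable_cube_clear:
  assumes "Inl k \<in> B" "\<And>j b. Inr ((k, j), b) \<in> B"
  shows "Measurable.pred (PiM B (brw_coord_law p \<mu>)) (cube_clear n r k)"
proof -
  note borel_measurable_brw_component [measurable]
  have [measurable]: "Measurable.pred (PiM B (brw_coord_law p \<mu>)) (\<lambda>f. family_hits n r (\<lambda>b. f (Inr ((k, j), b))))" for j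
    using assms(2) by (intro measurable_family_hits) measurable
  show ?thesis unfolding cube_clear_def using assms(1) by measurable
qed

lemma measure_brw_count:
  fixes k :: "int^'d::finite"
  defines "P \<equiv> brw_law p \<mu> :: ('d brw_idx \<Rightarrow> real) measure"
  shows "measure P {f \<in> space P. nat \<lfloor>f (Inl k)\<rfloor> = m} = exp (-1) / fact m"
proof -
  interpret product_prob_space "brw_coord_law p \<mu>" UNIV
    by (rule product_prob_spaceI) (rule prob_space_brw_coord_law[OF \<mu>(1)])
  have "{a::real. nat \<lfloor>a\<rfloor> = m} \<in> sets borel" by measurable
  then have "emeasure P {f \<in> space P. f (Inl k) \<in> {a. nat \<lfloor>a\<rfloor> = m}} = pmf (poisson_pmf 1) m"
    unfolding P_def brw_law_def
    by (subst emeasure_PiM_Collect_single) (simp_all add: emeasure_real_pmf_nat_floor)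
  then show ?thesis by (simp add: measure_def)
qed

lemma measure_family_not_hits:
  fixes k :: "int^'d::finite"
  defines "P \<equiv> brw_law p \<mu> :: ('d brw_idx \<Rightarrow> real) measure"
  shows "measure P {f \<in> space P. \<not> family_hits n r (\<lambda>b. f (Inr ((k, j), b)))} = 1 - cube_hit_prob p \<mu> n r k"
proof -
  let ?F = "family_law p \<mu> k" and ?H = "{s. family_hits n r s}"
  interpret F: prob_space ?F by (rule prob_space_family_law[OF \<mu>(1)])
  have "Measurable.pred ?F (\<lambda>s. family_hits n r s)"
    unfolding family_law_def
    by (intro measurable_family_hits borel_measurable_PiM_component sets_family_coord_law[OF \<mu>(2)]) simp
  then have H: "?H \<in> sets ?F"
    using \<mu>(2) by (simp add: pred_def)
  have "{f \<in> space P. \<not> family_hits n r (\<lambda>b. f (Inr ((k, j), b)))} = {f \<in> space P. (\<lambda>b. f (Inr ((k, j), b))) \<in> space ?F - ?H}"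
    using \<mu>(2) by auto
  also have "emeasure P \<dots> = emeasure ?F (space ?F - ?H)"
    unfolding P_def brw_law_def family_law_def using H
    by (subst emeasure_PiM_reindex[OF prob_space_brw_coord_law[OF \<mu>(1)]]) (auto simp: inj_def family_law_def)
  finally show ?thesis
    using F.prob_compl[OF H] by (simp add: measure_def cube_hit_prob_def)
qed

lemma measure_cube_clear_count:
  fixes k :: "int^'d::finite"
  defines "P \<equiv> brw_law p \<mu> :: ('d brw_idx \<Rightarrow> real) measure"
  shows "measure P {f \<in> space P. nat \<lfloor>f (Inl k)\<rfloor> = m \<and> (\<forall>j<m. \<not> family_hits n r (\<lambda>b. f (Inr ((k, j), b))))}
     = exp (-1) / fact m * (1 - cube_hit_prob p \<mu> n r k) ^ m"
proof -
  define B :: "nat option \<Rightarrow> 'd brw_idx set" where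
    "B l = (case l of None \<Rightarrow> {Inl k} | Some j \<Rightarrow> range (\<lambda>b. Inr ((k, j), b)))" for l
  define S where "S l = (case l of None \<Rightarrow> {h \<in> space (PiM (B None) (brw_coord_law p \<mu>)). nat \<lfloor>h (Inl k)\<rfloor> = m}
      | Some j \<Rightarrow> {h \<in> space (PiM (B (Some j)) (brw_coord_law p \<mu>)). \<not> family_hits n r (\<lambda>b. h (Inr ((k, j), b)))})" for l
  define L where "L = insert None (Some ` {..<m})"
  have S: "S l \<in> sets (PiM (B l) (brw_coord_law p \<mu>))" for l
  proof (cases l)
    case None
    have [measurable]: "(\<lambda>f. f (Inl k)) \<in> borel_measurable (PiM (B None) (brw_coord_law p \<mu>))"
      by (rule borel_measurable_brw_component) (simp add: B_def)
    show ?thesis unfolding None S_def by simp measurable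
  next
    case (Some j)
    have [measurable]: "Measurable.pred (PiM (B (Some j)) (brw_coord_law p \<mu>)) (\<lambda>h. family_hits n r (\<lambda>b. h (Inr ((k, j), b))))"
      by (intro measurable_family_hits borel_measurable_brw_component) (simp add: B_def)
    show ?thesis unfolding Some S_def by simp measurable
  qed
  have "measure P {f \<in> space P. \<forall>l\<in>L. restrict f (B l) \<in> S l}
      = (\<Prod>l\<in>L. measure P {f \<in> space P. restrict f (B l) \<in> S l})"
    unfolding P_def brw_law_def
    by (rule measure_PiM_disjoint_blocks[OF prob_space_brw_coord_law[OF \<mu>(1)] _ _ S])
      (auto simp: L_def disjoint_family_on_def B_def split: option.splits)
  moreover have "{f \<in> space P. \<forall>l\<in>L. restrict f (B l) \<in> S l}
      = {f \<in> space P. nat \<lfloor>f (Inl k)\<rfloor> = m \<and> (\<forall>j<m. \<not> family_hits n r (\<lambda>b. f (Inr ((k, j), b))))}"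
    using \<mu>(2) by (auto simp: P_def L_def S_def B_def space_PiM PiE_iff)
  moreover have "{f \<in> space P. restrict f (B None) \<in> S None} = {f \<in> space P. nat \<lfloor>f (Inl k)\<rfloor> = m}"
    using \<mu>(2) by (auto simp: P_def S_def B_def space_PiM PiE_iff)
  moreover have "{f \<in> space P. restrict f (B (Some j)) \<in> S (Some j)}
      = {f \<in> space P. \<not> family_hits n r (\<lambda>b. f (Inr ((k, j), b)))}" for j
    using \<mu>(2) by (auto simp: P_def S_def B_def space_PiM PiE_iff)
  ultimately show ?thesis
    by (simp add: L_def prod.reindex P_def measure_brw_count measure_family_not_hits)
qed

lemma measure_cube_clear:
  fixes k :: "int^'d::finite"
  defines "P \<equiv> brw_law p \<mu> :: ('d brw_idx \<Rightarrow> real) measure"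
  shows "measure P {f \<in> space P. cube_clear n r k f} = exp (- cube_hit_prob p \<mu> n r k)"
proof -
  let ?a = "cube_hit_prob p \<mu> n r k"
  interpret P: prob_space P unfolding P_def brw_law_def
    by (rule prob_space_PiM) (rule prob_space_brw_coord_law[OF \<mu>(1)])
  define A where "A m = {f \<in> space P. nat \<lfloor>f (Inl k)\<rfloor> = m \<and> (\<forall>j<m. \<not> family_hits n r (\<lambda>b. f (Inr ((k, j), b))))}" for m
  have [measurable]: "Measurable.pred P (\<lambda>f. family_hits n r (\<lambda>b. f (Inr ((k, j), b))))" for j
    unfolding P_def brw_law_def by (intro measurable_family_hits borel_measurable_brw_component) simp
  have [measurable]: "(\<lambda>f. f (Inl k)) \<in> borel_measurable P"
    unfolding P_def brw_law_def by (intro borel_measurable_brw_component) simp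
  have "range A \<subseteq> sets P" "disjoint_family A"
    by (auto simp: A_def disjoint_family_on_def)
  moreover have "(\<Union>m. A m) = {f \<in> space P. cube_clear n r k f}"
    by (auto simp: A_def cube_clear_def)
  ultimately have "(\<lambda>m. measure P (A m)) sums measure P {f \<in> space P. cube_clear n r k f}"
    using P.finite_measure_UNION[of A] by simp
  moreover have "measure P (A m) = exp (-1) * ((1 - ?a) ^ m /\<^sub>R fact m)" for m
    unfolding A_def P_def measure_cube_clear_count by (simp add: divide_inverse)
  then have "(\<lambda>m. measure P (A m)) sums (exp (-1) * exp (1 - ?a))"
    using sums_mult[OF exp_converges[of "1 - ?a"], of "exp (-1)"] by simp
  ultimately show ?thesis
    using sums_unique2 by (fastforce simp: mult_exp_exp)
qed

lemma measure_cubes_clear: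
  fixes K :: "(int^'d::finite) set"
  defines "P \<equiv> brw_law p \<mu> :: ('d brw_idx \<Rightarrow> real) measure"
  assumes K: "finite K"
  shows "measure P {f \<in> space P. \<forall>k\<in>K. cube_clear n r k f} = exp (- (\<Sum>k\<in>K. cube_hit_prob p \<mu> n r k))"
proof -
  define C :: "int^'d \<Rightarrow> 'd brw_idx set" where "C k = insert (Inl k) {Inr ((k, j), b) | j b. True}" for k
  define S where "S k = {h \<in> space (PiM (C k) (brw_coord_law p \<mu>)). cube_clear n r k h}" for k
  have S: "S k \<in> sets (PiM (C k) (brw_coord_law p \<mu>))" for k
    using measurable_cube_clear[of k "C k" n r] unfolding S_def by (auto simp: C_def)
  have "disjoint_family_on C K"
    by (auto simp: disjoint_family_on_def C_def)
  from measure_PiM_disjoint_blocks[OF prob_space_brw_coord_law[OF \<mu>(1)] K this S]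
  have "measure P {f \<in> space P. \<forall>k\<in>K. restrict f (C k) \<in> S k}
      = (\<Prod>k\<in>K. measure P {f \<in> space P. restrict f (C k) \<in> S k})"
    by (simp add: P_def brw_law_def)
  moreover have "restrict f (C k) \<in> S k \<longleftrightarrow> cube_clear n r k f" for f k
    using \<mu>(2) by (auto simp: S_def C_def cube_clear_def space_PiM PiE_iff)
  ultimately show ?thesis
    using K by (simp add: measure_cube_clear P_def exp_sum[symmetric] sum_negf)
qed

lemma tendsto_sum_cube_hit_prob:
  fixes K :: "nat \<Rightarrow> (int^'d::finite) set"
  defines "K N \<equiv> to_nat -` {..<N}"
  shows "(\<lambda>N. ennreal (\<Sum>k\<in>K N. cube_hit_prob p \<mu> n r k)) \<longlonglongrightarrow> hit_intensity p \<mu> n r TYPE('d)"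
proof -
  define f where "f N x = indicator (\<Union>k\<in>K N. cube k) x * hit_prob p \<mu> n r x"
    for N and x :: "'d \<Rightarrow> real"
  have [measurable]: "hit_prob p \<mu> n r \<in> borel_measurable (lborel_fun :: ('d \<Rightarrow> real) measure)"
    by (rule borel_measurable_hit_prob[OF \<mu>])
  have [measurable]: "cube k \<in> sets lborel_fun" for k :: "int^'d"
    by (rule cube_in_sets)
  have cube_iff: "x \<in> cube k \<longleftrightarrow> k = (\<chi> i. \<lfloor>x i\<rfloor>)" for x and k :: "int^'d"
    by (auto simp: cube_def vec_eq_iff floor_eq_iff PiE_iff) (metis floor_unique)
  have fin: "finite (K N)" for N
    unfolding K_def by (rule finite_vimageI) auto
  have sum_eq: "ennreal (\<Sum>k\<in>K N. cube_hit_prob p \<mu> n r k) = integral\<^sup>N lborel_fun (f N)" for N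
  proof -
    have "ennreal (\<Sum>k\<in>K N. cube_hit_prob p \<mu> n r k)
        = (\<Sum>k\<in>K N. ennreal (cube_hit_prob p \<mu> n r k))"
      by (simp add: cube_hit_prob_def)
    also have "\<dots> = (\<Sum>k\<in>K N. \<integral>\<^sup>+ x. indicator (cube k) x * hit_prob p \<mu> n r x \<partial>lborel_fun)"
      by (intro sum.cong refl cube_hit_prob_eq_nn_integral[OF \<mu>])
    also have "\<dots> = (\<integral>\<^sup>+ x. (\<Sum>k\<in>K N. indicator (cube k) x * hit_prob p \<mu> n r x) \<partial>lborel_fun)"
      by (rule nn_integral_sum[symmetric]) measurable
    also have "\<dots> = integral\<^sup>N lborel_fun (f N)"
      unfolding sum_distrib_right[symmetric] using fin[of N]
      by (intro nn_integral_cong) (simp add: f_def cube_iff indicator_def sum.If_cases)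
    finally show ?thesis .
  qed
  have "(\<lambda>N. integral\<^sup>N lborel_fun (f N)) \<longlonglongrightarrow> integral\<^sup>N lborel_fun (hit_prob p \<mu> n r :: ('d \<Rightarrow> real) \<Rightarrow> _)"
  proof (rule nn_integral_LIMSEQ)
    show "incseq f"
      by (auto simp: incseq_def le_fun_def f_def K_def indicator_def)
    show "f N \<in> borel_measurable lborel_fun" for N
      using fin[of N] unfolding f_def by measurable
    show "(\<lambda>N. f N x) \<longlonglongrightarrow> hit_prob p \<mu> n r x" for x
      by (rule tendsto_eventually)
        (auto simp: f_def K_def cube_iff eventually_sequentially intro!: exI[of _ "Suc (to_nat (\<chi> i. \<lfloor>x i\<rfloor>))"])
  qed
  then show ?thesis by (simp add: sum_eq hit_intensity_def)
qed

lemma measure_all_cubes_clear: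
  defines "P \<equiv> brw_law p \<mu> :: ('d::finite brw_idx \<Rightarrow> real) measure"
  shows "measure P {f \<in> space P. \<forall>k. cube_clear n r k f} = exp_neg_ennreal (hit_intensity p \<mu> n r TYPE('d))"
proof -
  define K :: "nat \<Rightarrow> (int^'d) set" where "K N = to_nat -` {..<N}" for N
  define G where "G N = {f \<in> space P. \<forall>k\<in>K N. cube_clear n r k f}" for N
  interpret P: prob_space P unfolding P_def brw_law_def
    by (rule prob_space_PiM) (rule prob_space_brw_coord_law[OF \<mu>(1)])
  have [measurable]: "Measurable.pred P (cube_clear n r k)" for k
    unfolding P_def brw_law_def by (rule measurable_cube_clear) auto
  have fin: "finite (K N)" for N
    unfolding K_def by (rule finite_vimageI) auto
  have "range G \<subseteq> sets P"
    using fin by (auto simp: G_def)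
  moreover have "decseq G"
    by (auto simp: decseq_def G_def K_def)
  ultimately have "(\<lambda>N. measure P (G N)) \<longlonglongrightarrow> measure P (\<Inter>N. G N)"
    by (rule P.finite_Lim_measure_decseq)
  moreover have "(\<Inter>N. G N) = {f \<in> space P. \<forall>k. cube_clear n r k f}"
    by (auto simp: G_def K_def)
  ultimately have "(\<lambda>N. measure P (G N)) \<longlonglongrightarrow> measure P {f \<in> space P. \<forall>k. cube_clear n r k f}"
    by simp
  moreover have "(\<lambda>N. measure P (G N)) \<longlonglongrightarrow> exp_neg_ennreal (hit_intensity p \<mu> n r TYPE('d))"
  proof -
    have "measure P (G N) = exp (- (\<Sum>k\<in>K N. cube_hit_prob p \<mu> n r k))" for N
      unfolding G_def P_def by (rule measure_cubes_clear[OF fin])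
    moreover have "(\<lambda>N. exp (- (\<Sum>k\<in>K N. cube_hit_prob p \<mu> n r k))) \<longlonglongrightarrow> exp_neg_ennreal (hit_intensity p \<mu> n r TYPE('d))"
      using tendsto_sum_cube_hit_prob[where 'd='d and n=n and r=r] unfolding K_def
      by (rule tendsto_exp_neg_ennreal[rotated]) (simp add: sum_nonneg cube_hit_prob_def)
    ultimately show ?thesis by simp
  qed
  ultimately show ?thesis
    by (rule LIMSEQ_unique)
qed

end

section \<open>The encoding preserves the law\<close>

definition idx_offspring :: "(int^'d) \<times> nat \<times> nat list \<Rightarrow> ('d::finite) brw_idx" where
  "idx_offspring = (\<lambda>(k, j, w). Inr ((k, j), Inr (Inl w)))"

definition idx_start :: "(int^'d) \<times> nat \<times> 'd \<Rightarrow> ('d::finite) brw_idx" where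
  "idx_start = (\<lambda>(k, j, i). Inr ((k, j), Inl i))"

definition idx_disp :: "(int^'d) \<times> nat \<times> nat list \<times> 'd \<Rightarrow> ('d::finite) brw_idx" where
  "idx_disp = (\<lambda>(k, j, w, i). Inr ((k, j), Inr (Inr (w, i))))"

lemma idx_simps [simp]:
  "idx_offspring (k, j, w) = Inr ((k, j), Inr (Inl w))"
  "idx_start (k, j, i) = Inr ((k, j), Inl i)"
  "idx_disp (k, j, w, i) = Inr ((k, j), Inr (Inr (w, i)))"
  by (simp_all add: idx_offspring_def idx_start_def idx_disp_def)

lemma inj_idx: "inj idx_offspring" "inj idx_start" "inj idx_disp"
  by (auto simp: inj_def idx_offspring_def idx_start_def idx_disp_def)

lemma brw_idx_cases:
  obtains k where "a = Inl k" | x where "a = idx_offspring x" | y where "a = idx_start y" | z where "a = idx_disp z"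
proof (cases a)
  case (Inr b)
  then obtain k j c where "a = Inr ((k, j), c)" by (metis prod.collapse)
  with that(2-4) show ?thesis by (metis idx_simps prod.collapse sum.exhaust)
qed

lemma prod_vimage_inj: "inj g \<Longrightarrow> (\<Prod>x\<in>g -` J. h (g x)) = (\<Prod>a\<in>J \<inter> range g. h a)"
  using prod.reindex[of g "g -` J" h] by (simp add: inj_on_subset image_vimage_eq Int_commute)

lemma prod_brw_idx_split:
  fixes h :: "('d::finite) brw_idx \<Rightarrow> 'a::comm_monoid_mult"
  assumes "finite J"
  shows "(\<Prod>a\<in>J. h a) = (\<Prod>k\<in>Inl -` J. h (Inl k)) * (\<Prod>x\<in>idx_offspring -` J. h (idx_offspring x)) *
    (\<Prod>y\<in>idx_start -` J. h (idx_start y)) * (\<Prod>z\<in>idx_disp -` J. h (idx_disp z))"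
proof -
  have "J = J \<inter> range Inl \<union> J \<inter> range idx_offspring \<union> J \<inter> range idx_start \<union> J \<inter> range idx_disp"
  proof (intro equalityI subsetI)
    fix a assume "a \<in> J"
    then show "a \<in> J \<inter> range Inl \<union> J \<inter> range idx_offspring \<union> J \<inter> range idx_start \<union> J \<inter> range idx_disp"
      by (cases a rule: brw_idx_cases) auto
  qed auto
  then have "(\<Prod>a\<in>J. h a) = (\<Prod>a\<in>J \<inter> range Inl. h a) * (\<Prod>a\<in>J \<inter> range idx_offspring. h a) *
      (\<Prod>a\<in>J \<inter> range idx_start. h a) * (\<Prod>a\<in>J \<inter> range idx_disp. h a)"
    using assms by (subst (1) \<open>J = _\<close>, subst prod.union_disjoint, (auto simp: idx_offspring_def idx_start_def idx_disp_def)[3])+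
      simp
  then show ?thesis by (simp add: prod_vimage_inj inj_idx)
qed

definition brw_encode :: "('d::finite) brw_outcome \<Rightarrow> 'd brw_idx \<Rightarrow> real" where
  "brw_encode \<omega> a = (case \<omega> of (N, xi, U, D) \<Rightarrow>
     (case a of Inl k \<Rightarrow> real (N k)
      | Inr ((k, j), Inl i) \<Rightarrow> U (k, j, i)
      | Inr ((k, j), Inr (Inl w)) \<Rightarrow> real (xi (k, j, w))
      | Inr ((k, j), Inr (Inr (w, i))) \<Rightarrow> D (k, j, w, i)))"

lemma brw_encode_simps [simp]:
  "brw_encode \<omega> (Inl k) = real (fst \<omega> k)"
  "brw_encode \<omega> (idx_offspring x) = real (fst (snd \<omega>) x)"
  "brw_encode \<omega> (idx_start y) = fst (snd (snd \<omega>)) y"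
  "brw_encode \<omega> (idx_disp z) = snd (snd (snd \<omega>)) z"
  by (auto simp: brw_encode_def idx_offspring_def idx_start_def idx_disp_def split: prod.splits)

lemma measurable_brw_encode:
  assumes \<mu>: "sets \<mu> = sets borel"
  shows "brw_encode \<in> brw_space p \<mu> \<rightarrow>\<^sub>M (brw_law p \<mu> :: ('d::finite brw_idx \<Rightarrow> real) measure)"
  unfolding brw_law_def
proof (rule measurable_PiM_single')
  fix a :: "'d brw_idx"
  have count: "f \<in> measure_pmf q \<rightarrow>\<^sub>M count_space UNIV" for f :: "nat \<Rightarrow> nat" and q
    by (simp add: measurable_cong_sets[OF sets_measure_pmf_count_space refl])
  have "(\<lambda>\<omega>. brw_encode \<omega> a) \<in> borel_measurable (brw_space p \<mu> :: 'd brw_outcome measure)"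
  proof (cases a rule: brw_idx_cases)
    case (1 k)
    have [measurable]: "(\<lambda>\<omega>. fst \<omega> k) \<in> (brw_space p \<mu> :: 'd brw_outcome measure) \<rightarrow>\<^sub>M count_space UNIV"
      unfolding brw_space_def by (rule measurable_compose[OF _ count]) measurable
    show ?thesis unfolding 1 by simp measurable
  next
    case (2 x)
    have [measurable]: "(\<lambda>\<omega>. fst (snd \<omega>) x) \<in> (brw_space p \<mu> :: 'd brw_outcome measure) \<rightarrow>\<^sub>M count_space UNIV"
      unfolding brw_space_def by (rule measurable_compose[OF _ count]) measurable
    show ?thesis unfolding 2 by simp measurable
  next
    case (3 y)
    show ?thesis unfolding 3 brw_encode_simps brw_space_def
      by (rule borel_measurable_if_sets_eq_borel, measurable) (simp split: prod.splits)
  next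
    case (4 z)
    show ?thesis unfolding 4 brw_encode_simps brw_space_def
      by (rule borel_measurable_if_sets_eq_borel, measurable) (rule \<mu>)
  qed
  then show "(\<lambda>\<omega>. brw_encode \<omega> a) \<in> brw_space p \<mu> \<rightarrow>\<^sub>M brw_coord_law p \<mu> a"
    by (simp add: measurable_cong_sets[OF refl sets_brw_coord_law[OF \<mu>]])
qed (use \<mu> in auto)

lemma brw_encode_box_eq:
  fixes J :: "('d::finite) brw_idx set"
  shows "{\<omega>. \<forall>a\<in>J. brw_encode \<omega> a \<in> A a} =
     {N. \<forall>k\<in>Inl -` J. real (N k) \<in> A (Inl k)} \<times>
     ({xi. \<forall>x\<in>idx_offspring -` J. real (xi x) \<in> A (idx_offspring x)} \<times>
      ({U. \<forall>y\<in>idx_start -` J. U y \<in> A (idx_start y)} \<times>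
       {D. \<forall>z\<in>idx_disp -` J. D z \<in> A (idx_disp z)}))"
  (is "?L = ?R")
proof (intro equalityI subsetI)
  fix \<omega> :: "'d brw_outcome" assume "\<omega> \<in> ?R"
  then have "brw_encode \<omega> a \<in> A a" if "a \<in> J" for a
    using that by (cases a rule: brw_idx_cases) (auto simp del: idx_simps)
  then show "\<omega> \<in> ?L" by simp
next
  fix \<omega> :: "'d brw_outcome" assume "\<omega> \<in> ?L"
  then have "\<And>k. Inl k \<in> J \<Longrightarrow> real (fst \<omega> k) \<in> A (Inl k)"
    "\<And>x. idx_offspring x \<in> J \<Longrightarrow> real (fst (snd \<omega>) x) \<in> A (idx_offspring x)"
    "\<And>y. idx_start y \<in> J \<Longrightarrow> fst (snd (snd \<omega>)) y \<in> A (idx_start y)"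
    "\<And>z. idx_disp z \<in> J \<Longrightarrow> snd (snd (snd \<omega>)) z \<in> A (idx_disp z)"
    by (metis (mono_tags, lifting) brw_encode_simps mem_Collect_eq)+
  then show "\<omega> \<in> ?R"
    by (cases \<omega>) (auto simp del: idx_simps)
qed

lemma emeasure_brw_space_box:
  fixes J :: "('d::finite) brw_idx set"
  assumes \<mu>: "prob_space \<mu>" "sets \<mu> = sets borel"
    and J: "finite J" and A: "\<And>a. a \<in> J \<Longrightarrow> A a \<in> sets borel"
  shows "emeasure (brw_space p \<mu> :: 'd brw_outcome measure) {\<omega>. \<forall>a\<in>J. brw_encode \<omega> a \<in> A a}
       = (\<Prod>a\<in>J. emeasure (brw_coord_law p \<mu> a) (A a))"
proof -
  let ?U = "\<lambda>(k :: int^'d, j :: nat, i :: 'd). uniform_measure lborel {real_of_int (k$i) ..< real_of_int (k$i) + 1}"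
  let ?MA = "PiM UNIV (\<lambda>_::int^'d. measure_pmf (poisson_pmf 1))"
  let ?MX = "PiM UNIV (\<lambda>_::(int^'d) \<times> nat \<times> nat list. measure_pmf p)"
  let ?MU = "PiM UNIV ?U" and ?MD = "PiM UNIV (\<lambda>_::(int^'d) \<times> nat \<times> nat list \<times> 'd. \<mu>)"
  have prob_U: "prob_space (?U y)" for y
    by (cases y) (auto intro: prob_space_uniform_measure)
  define S1 where "S1 = {x \<in> space ?MA. \<forall>k\<in>Inl -` J. x k \<in> {n. real n \<in> A (Inl k)}}"
  define S2 where "S2 = {x \<in> space ?MX. \<forall>y\<in>idx_offspring -` J. x y \<in> {n. real n \<in> A (idx_offspring y)}}"
  define S3 where "S3 = {x \<in> space ?MU. \<forall>y\<in>idx_start -` J. x y \<in> A (idx_start y)}"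
  define S4 where "S4 = {x \<in> space ?MD. \<forall>y\<in>idx_disp -` J. x y \<in> A (idx_disp y)}"
  have "A (idx_start y) \<in> sets (?U y)" if "idx_start y \<in> J" for y
    using A[OF that] by (cases y) simp
  note S3 = emeasure_PiM_Collect_vimage[where X="\<lambda>y. A (idx_start y)", OF prob_U inj_idx(2) J this, folded S3_def]
  have count: "\<And>X. X \<in> sets (measure_pmf q)" for q :: "nat pmf" by simp
  note S1 = emeasure_PiM_Collect_vimage[where M="\<lambda>_. measure_pmf (poisson_pmf 1)" and X="\<lambda>k. {n. real n \<in> A (Inl k)}",
      OF measure_pmf.prob_space_axioms inj_Inl J count, folded S1_def]
  note S2 = emeasure_PiM_Collect_vimage[where M="\<lambda>_. measure_pmf p" and X="\<lambda>x. {n. real n \<in> A (idx_offspring x)}",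
      OF measure_pmf.prob_space_axioms inj_idx(1) J count, folded S2_def]
  have "A (idx_disp z) \<in> sets \<mu>" if "idx_disp z \<in> J" for z
    using A[OF that] \<mu>(2) by simp
  note S4 = emeasure_PiM_Collect_vimage[where M="\<lambda>_. \<mu>" and X="\<lambda>z. A (idx_disp z)", OF \<mu>(1) inj_idx(3) J this, folded S4_def]
  have "{\<omega>. \<forall>a\<in>J. brw_encode \<omega> a \<in> A a} = S1 \<times> (S2 \<times> (S3 \<times> S4))"
    unfolding brw_encode_box_eq S1_def S2_def S3_def S4_def using sets_eq_imp_space_eq[OF \<mu>(2)]
    by (auto simp: space_PiM split: prod.splits)
  have "emeasure (brw_space p \<mu> :: 'd brw_outcome measure) {\<omega>. \<forall>a\<in>J. brw_encode \<omega> a \<in> A a}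
      = emeasure ?MA S1 * (emeasure ?MX S2 * (emeasure ?MU S3 * emeasure ?MD S4))"
    unfolding \<open>{\<omega>. \<forall>a\<in>J. brw_encode \<omega> a \<in> A a} = _\<close> brw_space_def
    using \<mu>(1) prob_U S1(1) S2(1) S3(1) S4(1)
    by (intro emeasure_pair_measure_Times4 prob_space_PiM measure_pmf.prob_space_axioms)
  also have "\<dots> = (\<Prod>k\<in>Inl -` J. emeasure (measure_pmf (poisson_pmf 1)) {n. real n \<in> A (Inl k)}) *
        ((\<Prod>x\<in>idx_offspring -` J. emeasure (measure_pmf p) {n. real n \<in> A (idx_offspring x)}) *
         ((\<Prod>y\<in>idx_start -` J. emeasure (?U y) (A (idx_start y))) *
          (\<Prod>z\<in>idx_disp -` J. emeasure \<mu> (A (idx_disp z)))))"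
    by (simp only: S1(2) S2(2) S3(2) S4(2))
  also have "\<dots> = (\<Prod>a\<in>J. emeasure (brw_coord_law p \<mu> a) (A a))"
    unfolding prod_brw_idx_split[OF J] using A
    by (auto simp: emeasure_real_pmf unit_uniform_def mult.assoc intro!: arg_cong2[where f="(*)"] prod.cong)
  finally show ?thesis .
qed

lemma prob_space_brw_space: "prob_space \<mu> \<Longrightarrow> prob_space (brw_space p \<mu>)"
  unfolding brw_space_def
  by (intro prob_space_pair prob_space_PiM measure_pmf.prob_space_axioms)
    (auto intro: prob_space_uniform_measure split: prod.splits)

lemma space_brw_space: "sets \<mu> = sets borel \<Longrightarrow> space (brw_space p \<mu>) = UNIV"
  using sets_eq_imp_space_eq[of \<mu> borel] by (auto simp: brw_space_def space_pair_measure space_PiM)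

lemma distr_brw_encode:
  fixes p :: "nat pmf" and \<mu> :: "real measure"
  assumes \<mu>: "prob_space \<mu>" "sets \<mu> = sets borel"
  defines "\<Omega> \<equiv> brw_space p \<mu> :: ('d::finite) brw_outcome measure" and "P \<equiv> brw_law p \<mu> :: ('d brw_idx \<Rightarrow> real) measure"
  shows "distr \<Omega> P brw_encode = P"
proof (rule measure_eqI_PiM_infinite[where I=UNIV and M="brw_coord_law p \<mu>"])
  have enc: "brw_encode \<in> \<Omega> \<rightarrow>\<^sub>M P"
    unfolding \<Omega>_def P_def by (rule measurable_brw_encode[OF \<mu>(2)])
  interpret D: prob_space "distr \<Omega> P brw_encode"
    by (rule prob_space.prob_space_distr[OF _ enc]) (simp add: \<Omega>_def prob_space_brw_space[OF \<mu>(1)])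
  show "finite_measure (distr \<Omega> P brw_encode)"
    by unfold_locales
  fix J and A :: "'d brw_idx \<Rightarrow> real set"
  assume J: "finite J" "J \<subseteq> UNIV" and A: "\<And>a. a \<in> J \<Longrightarrow> A a \<in> sets (brw_coord_law p \<mu> a)"
  let ?E = "prod_emb UNIV (brw_coord_law p \<mu>) J (Pi\<^sub>E J A)"
  have E: "?E \<in> sets P"
    unfolding P_def brw_law_def using J A by (intro sets_PiM_I) auto
  have "emeasure (distr \<Omega> P brw_encode) ?E = emeasure \<Omega> (brw_encode -` ?E \<inter> space \<Omega>)"
    by (rule emeasure_distr[OF enc E])
  also have "brw_encode -` ?E \<inter> space \<Omega> = {\<omega>. \<forall>a\<in>J. brw_encode \<omega> a \<in> A a}"
    using \<mu>(2) by (auto simp: \<Omega>_def space_brw_space prod_emb_iff PiE_iff extensional_def)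
  also have "emeasure \<Omega> \<dots> = (\<Prod>a\<in>J. emeasure (brw_coord_law p \<mu> a) (A a))"
    unfolding \<Omega>_def using A sets_brw_coord_law[OF \<mu>(2)] by (intro emeasure_brw_space_box[OF \<mu> J(1)]) auto
  also have "\<dots> = emeasure P ?E"
    unfolding P_def brw_law_def using J A
    by (intro emeasure_PiM_emb[symmetric] prob_space_brw_coord_law[OF \<mu>(1)]) auto
  finally show "emeasure (distr \<Omega> P brw_encode) ?E = emeasure P ?E" .
qed (simp_all add: P_def brw_law_def)

definition gen_in_ball :: "nat \<Rightarrow> ('d::finite) brw_outcome \<Rightarrow> real \<Rightarrow> bool" where
  "gen_in_ball n \<omega> u \<longleftrightarrow> (\<exists>k j w. brw_alive \<omega> k j w \<and> length w = n \<and> norm (brw_pos \<omega> k j w) < u)"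

lemma brw_Z_ball_eq_0_iff: "brw_Z n \<omega> (ball 0 u) = 0 \<longleftrightarrow> \<not> gen_in_ball n \<omega> u"
proof -
  let ?S = "{(k, j, w). brw_alive \<omega> k j w \<and> length w = n \<and> brw_pos \<omega> k j w \<in> ball 0 u}"
  have "brw_Z n \<omega> (ball 0 u) = 0 \<longleftrightarrow> ?S = {}"
  proof (cases "finite ?S")
    case False
    then have "?S \<noteq> {}" by (metis finite.emptyI)
    with False show ?thesis unfolding brw_Z_def Let_def by simp
  qed (simp add: brw_Z_def zero_enat_def)
  also have "\<dots> \<longleftrightarrow> \<not> gen_in_ball n \<omega> u"
    by (auto simp: gen_in_ball_def)
  finally show ?thesis .
qed

lemma brw_R_ge_iff:
  assumes r: "0 < r"
  shows "brw_R n \<omega> \<ge> ereal r \<longleftrightarrow> \<not> gen_in_ball n \<omega> r"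
proof
  assume "\<not> gen_in_ball n \<omega> r"
  then show "brw_R n \<omega> \<ge> ereal r"
    unfolding brw_R_def using r by (intro Sup_upper) (auto simp: brw_Z_ball_eq_0_iff)
next
  assume ge: "brw_R n \<omega> \<ge> ereal r"
  show "\<not> gen_in_ball n \<omega> r"
  proof
    assume "gen_in_ball n \<omega> r"
    then obtain k j w where kjw: "brw_alive \<omega> k j w" "length w = n" "norm (brw_pos \<omega> k j w) < r"
      unfolding gen_in_ball_def by blast
    have "u \<le> norm (brw_pos \<omega> k j w)" if "\<not> gen_in_ball n \<omega> u" for u
      using that kjw unfolding gen_in_ball_def by force
    then have "brw_R n \<omega> \<le> ereal (norm (brw_pos \<omega> k j w))"
      unfolding brw_R_def by (intro Sup_least) (auto simp: brw_Z_ball_eq_0_iff)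
    then have "ereal r \<le> ereal (norm (brw_pos \<omega> k j w))"
      using ge by (rule order_trans[rotated])
    with kjw(3) show False by simp
  qed
qed

lemma norm_less_iff_sum_sq:
  fixes v :: "real^'d::finite"
  assumes "0 < r"
  shows "norm v < r \<longleftrightarrow> (\<Sum>i\<in>UNIV. (v$i)\<^sup>2) < r\<^sup>2"
proof -
  have "norm v < r \<longleftrightarrow> sqrt (\<Sum>i\<in>UNIV. (v$i)\<^sup>2) < sqrt (r\<^sup>2)"
    using assms by (simp add: norm_vec_def L2_set_def)
  then show ?thesis by (simp only: real_sqrt_less_iff)
qed

lemma not_gen_in_ball_iff_cubes_clear:
  assumes "0 < r"
  shows "\<not> gen_in_ball n \<omega> r \<longleftrightarrow> (\<forall>k. cube_clear n r k (brw_encode \<omega>))"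
proof -
  obtain N xi U D where \<omega>: "\<omega> = (N, xi, U, D)" by (metis prod.collapse)
  have alive: "tree_alive (\<lambda>b. brw_encode \<omega> (Inr ((k, j), Inr b))) w \<longleftrightarrow> (\<forall>t<length w. w ! t < xi (k, j, take t w))"
    for k j w by (simp add: tree_alive_def offspring_def brw_encode_def \<omega>)
  have pos: "brw_pos \<omega> k j w $ i = U (k, j, i) + tree_disp (\<lambda>b. brw_encode \<omega> (Inr ((k, j), Inr b))) w i"
    for k j w i by (simp add: brw_pos_def tree_disp_def brw_encode_def \<omega>)
  have hits: "family_hits n r (\<lambda>b. brw_encode \<omega> (Inr ((k, j), b))) \<longleftrightarrow>
      (\<exists>w. length w = n \<and> (\<forall>t<length w. w ! t < xi (k, j, take t w)) \<and> norm (brw_pos \<omega> k j w) < r)" for k j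
    unfolding family_hits_def tree_hits_def alive in_ball0_def norm_less_iff_sum_sq[OF assms] pos
    by (simp add: brw_encode_def \<omega>)
  show ?thesis
    unfolding cube_clear_def hits gen_in_ball_def brw_alive_def by (auto simp: \<omega> brw_encode_def)
qed

lemma prob_brw_R_ge:
  fixes p :: "nat pmf" and \<mu> :: "real measure"
  assumes \<mu>: "prob_space \<mu>" "sets \<mu> = sets borel" and r: "0 < r"
  defines "\<Omega> \<equiv> brw_space p \<mu> :: ('d::finite) brw_outcome measure"
  shows "measure \<Omega> {\<omega> \<in> space \<Omega>. brw_R n \<omega> \<ge> ereal r} = exp_neg_ennreal (hit_intensity p \<mu> n r TYPE('d))"
proof -
  let ?P = "brw_law p \<mu> :: ('d brw_idx \<Rightarrow> real) measure"
  let ?G = "{f \<in> space ?P. \<forall>k. cube_clear n r k f}"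
  have enc: "brw_encode \<in> \<Omega> \<rightarrow>\<^sub>M ?P"
    unfolding \<Omega>_def by (rule measurable_brw_encode[OF \<mu>(2)])
  have [measurable]: "Measurable.pred ?P (cube_clear n r k)" for k
    unfolding brw_law_def by (rule measurable_cube_clear[OF \<mu>]) auto
  have "{\<omega> \<in> space \<Omega>. brw_R n \<omega> \<ge> ereal r} = brw_encode -` ?G \<inter> space \<Omega>"
    using \<mu>(2) by (auto simp: brw_R_ge_iff[OF r] not_gen_in_ball_iff_cubes_clear[OF r])
  then have "measure \<Omega> {\<omega> \<in> space \<Omega>. brw_R n \<omega> \<ge> ereal r} = measure (distr \<Omega> ?P brw_encode) ?G"
    using enc by (simp add: measure_distr)
  also have "\<dots> = measure ?P ?G"
    unfolding \<Omega>_def by (simp add: distr_brw_encode[OF \<mu>])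
  also have "\<dots> = exp_neg_ennreal (hit_intensity p \<mu> n r TYPE('d))"
    by (rule measure_all_cubes_clear[OF \<mu>])
  finally show ?thesis .
qed

theorem proposition4p1:
  fixes p :: "nat pmf" and \<mu> :: "real measure"
    and d_type :: "'d::finite itself"
  assumes p0: "pmf p 0 < 1" and p1: "pmf p 1 < 1"
    and mean_le: "(\<integral>\<^sup>+ k. ennreal (real k) \<partial>measure_pmf p) \<le> 1"
    and mu_prob: "prob_space \<mu>" and mu_borel: "sets \<mu> = sets borel"
    and mu_int: "integrable \<mu> (\<lambda>x. x)" and mu_mean: "(\<integral>x. x \<partial>\<mu>) = 0"
  shows "\<exists>F :: real \<Rightarrow> ennreal. \<forall>r > 0.
           (\<lambda>n. measure (brw_space p \<mu> :: 'd brw_outcome measure)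
                   {\<omega> \<in> space (brw_space p \<mu>). brw_R n \<omega> \<ge> ereal r})
           \<longlonglongrightarrow> exp_neg_ennreal (F r)"
proof -
  have "\<exists>v. (\<lambda>n. measure (brw_space p \<mu> :: 'd brw_outcome measure)
                   {\<omega> \<in> space (brw_space p \<mu>). brw_R n \<omega> \<ge> ereal r}) \<longlonglongrightarrow> exp_neg_ennreal v"
    if r: "0 < r" for r
  proof -
    have "decseq (\<lambda>n. hit_intensity p \<mu> n r TYPE('d))"
      by (rule decseq_SucI) (rule hit_intensity_Suc_le[OF mu_prob mu_borel mean_le])
    then show ?thesis
      unfolding prob_brw_R_ge[OF mu_prob mu_borel r] by (rule decseq_exp_neg_ennreal_tendsto)
  qed
  then have "\<forall>r. \<exists>v. 0 < r \<longrightarrow> (\<lambda>n. measure (brw_space p \<mu> :: 'd brw_outcome measure)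
      {\<omega> \<in> space (brw_space p \<mu>). brw_R n \<omega> \<ge> ereal r}) \<longlonglongrightarrow> exp_neg_ennreal v"
    by blast
  from choice[OF this] show ?thesis by blast
qed

end
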